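(* Let $d\in\mathbb{N}$ and let $\eta,\xi_1,\dots,\xi_d\in L^2(\mathbb{R})$ be linearly independent with $|\eta|=1$; put $\xi=(\xi_1,\dots,\xi_d)$. Then there exists a constant $C(\eta,\xi)\in\mathbb{R}$ (independent of $p$) such that for every $1\le p<\infty$ and every $\varphi\in\mathcal{P}_\xi$, $$\|P_\eta\varphi\|_{L^p(\mu)}\le C(\eta,\xi)\,\|\varphi\|_{L^p(\mu)}.$$ Consequently, for each $1\le p<\infty$, $P_\eta$ extends uniquely to a bounded linear operator from the closure $\overline{\mathcal{P}_\xi}^{L^p(\mu)}$ to $L^p(\mu)$.
   Context: Let $\mathcal{S}(\mathbb{R})$ be the Schwartz space and $\mathcal{S}'(\mathbb{R})$ its dual, with dual pairing $\langle\cdot,\cdot\rangle$ extending the $L^2(\mathbb{R})$ inner product (bilinearly extended to complex functions); $|\cdot|$ is the $L^2$ norm. The white noise measure $\mu$ on $\mathcal{S}'(\mathbb{R})$ is given by $\int \exp(i\langle \omega,\xi\rangle)d\mu(\omega)=\exp(-\tfrac12\langle\xi,\xi\rangle)$; for $\xi\in L^2(\mathbb{R})$, $\langle\cdot,\xi\rangle$ is defined as an $L^2(\mu)$-limit, and $(\langle\cdot,\xi_1\rangle,\dots,\langle\cdot,\xi_d\rangle)$ is centered Gaussian with covariance $(\langle\xi_k,\xi_l\rangle)_{k,l}$. $L^p(\mu)$ is the space of complex-valued $p$-integrable functions on $(\mathcal{S}'(\mathbb{R}),\mu)$. $\mathcal{P}_\xi:=\{P(\langle\cdot,\xi_1\rangle,\dots,\langle\cdot,\xi_d\rangle):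 P \text{ polynomial on }\mathbb{R}^d\}$. For $f^{(n)}\in L^2(\mathbb{R}^n;\mathbb{C})_{sym}$, $\langle :\cdot^{\otimes n}:, f^{(n)}\rangle$ is the $n$-th multiple Wiener–Itô integral; $\mathcal{G}$ is the space of $\varphi=\sum_n\langle :\cdot^{\otimes n}:,\varphi^{(n)}\rangle\in L^2(\mu)$ with $\sum_n n!2^{qn}|\varphi^{(n)}|^2<\infty$ for all $q\in\mathbb{N}_0$; $\mathcal{P}_\xi\subset\mathcal{G}$. For $|\eta|=1$ let $P_{\perp,\eta}\xi:=\xi-\langle\xi,\eta\rangle\eta$. The projection operator $P_\eta$ is the unique continuous linear operator $\mathcal{G}\to\mathcal{G}$ which on smooth polynomials $\varphi=\sum_{n=0}^N\langle :\cdot^{\otimes n}:,\varphi^{(n)}\rangle$ ($\varphi^{(n)}\in\mathrm{span}\{\zeta^{\otimes n}:\zeta\in\mathcal{S}(\mathbb{R};\mathbb{C})\}$) is given by $$P_\eta\varphi=\sum_{n=0}^N\sum_{k=0}^{\lfloor n/2\rfloor}\frac{n!(-1)^k}{k!(n-2k)!2^k}\Big\langle :\cdot^{\otimes(n-2k)}:, P_{\perp,\eta}^{\otimes(n-2k)}\big(\eta^{\otimes 2k}\hat\otimes_{2k}\varphi^{(n)}\big)\Big\rangle,$$ $(\eta^{\otimes 2k}\hat\otimes_{2k}\varphi^{(n)})(x)=\int_{\mathbb{R}^{2k}}\varphi^{(n)}(y_1,\dots,y_{2k},x_1,\dots,x_{n-2k})\eta(y_1)\cdots\eta(y_{2k})dy$.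 (On $\mathcal{P}_\xi$ it acts by $P(\langle\cdot,\xi_1\rangle,\dots)\mapsto P(\langle\cdot,P_{\perp,\eta}\xi_1\rangle,\dots)$.) *)

theory Defs
  imports "HOL-Probability.Probability"
begin

definition L2 :: "(real \<Rightarrow> real) set" where
  "L2 = {f. f \<in> borel_measurable lborel \<and> integrable lborel (\<lambda>x. (f x)\<^sup>2)}"

definition ip :: "(real \<Rightarrow> real) \<Rightarrow> (real \<Rightarrow> real) \<Rightarrow> real" where
  "ip f g = (LINT x|lborel. f x * g x)"

definition L2_lin_indep :: "(real \<Rightarrow> real) list \<Rightarrow> bool" where
  "L2_lin_indep fs \<longleftrightarrow>
     (\<forall>c :: nat \<Rightarrow> real. (AE x in lborel. (\<Sum>k<length fs. c k * (fs ! k) x) = 0)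
        \<longrightarrow> (\<forall>k<length fs. c k = 0))"

definition perp :: "(real \<Rightarrow> real) \<Rightarrow> (real \<Rightarrow> real) \<Rightarrow> (real \<Rightarrow> real)" where
  "perp \<eta> f = (\<lambda>x. f x - ip f \<eta> * \<eta> x)"

text \<open>Isonormal Gaussian process on L2(R) (the map xi to <.,xi> on the white noise space):
  linear almost surely and with characteristic functional exp(-|xi|^2/2).\<close>
definition isonormal :: "'a measure \<Rightarrow> ((real \<Rightarrow> real) \<Rightarrow> 'a \<Rightarrow> real) \<Rightarrow> bool" where
  "isonormal M W \<longleftrightarrow> prob_space M \<and>
     (\<forall>f\<in>L2. W f \<in> borel_measurable M) \<and>
     (\<forall>f\<in>L2. \<forall>g\<in>L2. \<forall>a b :: real.
        AE \<omega> in M. W (\<lambda>x. a * f x + b * g x) \<omega> = a * W f \<omega> + b * W g \<omega>) \<and>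
     (\<forall>f\<in>L2. (\<integral>\<omega>. exp (\<i> * complex_of_real (W f \<omega>)) \<partial>M)
                = exp (- complex_of_real (ip f f / 2)))"

text \<open>Complex polynomials in d real variables, given by a finitely supported coefficient
  function on exponent vectors (only the first d exponents matter).\<close>
definition is_poly_coeffs :: "((nat \<Rightarrow> nat) \<Rightarrow> complex) \<Rightarrow> bool" where
  "is_poly_coeffs c \<longleftrightarrow> finite {\<alpha>. c \<alpha> \<noteq> 0}"

definition poly_eval :: "((nat \<Rightarrow> nat) \<Rightarrow> complex) \<Rightarrow> nat \<Rightarrow> (nat \<Rightarrow> real) \<Rightarrow> complex" where
  "poly_eval c d x = (\<Sum>\<alpha>\<in>{\<alpha>. c \<alpha> \<noteq> 0}. c \<alpha> * (\<Prod>k<d. complex_of_real (x k) ^ \<alpha> k))"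

definition poly_fun :: "((real \<Rightarrow> real) \<Rightarrow> 'a \<Rightarrow> real) \<Rightarrow> ((nat \<Rightarrow> nat) \<Rightarrow> complex)
                        \<Rightarrow> (real \<Rightarrow> real) list \<Rightarrow> 'a \<Rightarrow> complex" where
  "poly_fun W c xs = (\<lambda>\<omega>. poly_eval c (length xs) (\<lambda>k. W (xs ! k) \<omega>))"

definition Lp_norm :: "'a measure \<Rightarrow> real \<Rightarrow> ('a \<Rightarrow> complex) \<Rightarrow> real" where
  "Lp_norm M p f = (LINT \<omega>|M. cmod (f \<omega>) powr p) powr (1 / p)"

definition in_Lp :: "'a measure \<Rightarrow> real \<Rightarrow> ('a \<Rightarrow> complex) \<Rightarrow> bool" where
  "in_Lp M p f \<longleftrightarrow> f \<in> borel_measurable M \<and> integrable M (\<lambda>\<omega>. cmod (f \<omega>) powr p)"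

definition Lp_closure_poly :: "'a measure \<Rightarrow> real \<Rightarrow> ((real \<Rightarrow> real) \<Rightarrow> 'a \<Rightarrow> real)
                              \<Rightarrow> (real \<Rightarrow> real) list \<Rightarrow> ('a \<Rightarrow> complex) set" where
  "Lp_closure_poly M p W xs = {f. in_Lp M p f \<and>
     (\<exists>cs :: nat \<Rightarrow> (nat \<Rightarrow> nat) \<Rightarrow> complex. (\<forall>n. is_poly_coeffs (cs n)) \<and>
        (\<lambda>n. Lp_norm M p (\<lambda>\<omega>. poly_fun W (cs n) xs \<omega> - f \<omega>)) \<longlonglongrightarrow> 0)}"

definition bounded_ext :: "'a measure \<Rightarrow> real \<Rightarrow> ((real \<Rightarrow> real) \<Rightarrow> 'a \<Rightarrow> real)
        \<Rightarrow> (real \<Rightarrow> real) \<Rightarrow> (real \<Rightarrow> real) list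
        \<Rightarrow> (('a \<Rightarrow> complex) \<Rightarrow> ('a \<Rightarrow> complex)) \<Rightarrow> bool" where
  "bounded_ext M p W \<eta> xs T \<longleftrightarrow>
     (\<forall>f\<in>Lp_closure_poly M p W xs. in_Lp M p (T f)) \<and>
     (\<forall>f\<in>Lp_closure_poly M p W xs. \<forall>g\<in>Lp_closure_poly M p W xs. \<forall>a b :: complex.
        AE \<omega> in M. T (\<lambda>\<omega>'. a * f \<omega>' + b * g \<omega>') \<omega> = a * T f \<omega> + b * T g \<omega>) \<and>
     (\<exists>K. \<forall>f\<in>Lp_closure_poly M p W xs. Lp_norm M p (T f) \<le> K * Lp_norm M p f) \<and>
     (\<forall>c. is_poly_coeffs c \<longrightarrow>
        (AE \<omega> in M. T (poly_fun W c xs) \<omega> = poly_fun W c (map (perp \<eta>) xs) \<omega>))"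

end

theory Submission
  imports Defs
begin

text \<open>
  Write \<open>\<xi>\<^sub>k = P\<^sub>\<bottom>\<xi>\<^sub>k + a\<^sub>k \<eta>\<close> with \<open>a\<^sub>k = \<langle>\<xi>\<^sub>k, \<eta>\<rangle>\<close>. By linear independence the Gram system of the
  \<open>P\<^sub>\<bottom>\<xi>\<^sub>k\<close> is solvable, which yields a unit vector \<open>e\<close> in their span with
  \<open>P\<^sub>\<bottom>\<xi>\<^sub>k = g\<^sub>k + c\<^sub>k e\<close>, \<open>g\<^sub>k \<bottom> e\<close>, and a second unit vector \<open>e'\<close> with
  \<open>\<xi>\<^sub>k = g\<^sub>k + \<sigma> c\<^sub>k e'\<close>, \<open>g\<^sub>k \<bottom> e'\<close>, where \<open>\<sigma> \<ge> 1\<close>. Orthogonal directions of white noise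
  are independent, so \<open>(\<langle>\<cdot>,P\<^sub>\<bottom>\<xi>\<^sub>k\<rangle>)\<^sub>k\<close> has the law of \<open>X + c Z\<close> and \<open>(\<langle>\<cdot>,\<xi>\<^sub>k\<rangle>)\<^sub>k\<close> that
  of \<open>X + \<sigma> c Z\<close>, with \<open>Z\<close> standard Gaussian and independent of \<open>X\<close>. Since the Gaussian density
  satisfies \<open>\<phi>(\<sigma> r) \<le> \<phi>(r)\<close>, \<open>E G(X + c Z) \<le> \<sigma> E G(X + \<sigma> c Z)\<close> for every \<open>G \<ge> 0\<close>; taking
  \<open>G = |F|\<^sup>p\<close> gives the bound with \<open>C = \<sigma>\<close>, uniformly in \<open>p\<close>. Elements of the \<open>L\<^sup>p\<close>-closure of
  \<open>\<P>\<^sub>\<xi>\<close> are a.e. Borel functions \<open>F\<close> of \<open>(\<langle>\<cdot>,\<xi>\<^sub>k\<rangle>)\<^sub>k\<close>, and the same domination shows that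
  \<open>F(\<langle>\<cdot>,\<xi>\<rangle>) \<mapsto> F(\<langle>\<cdot>,P\<^sub>\<bottom>\<xi>\<rangle>)\<close> is a well-defined bounded extension of \<open>P\<^sub>\<eta>\<close>.
  Independence is derived from characteristic functions, via a multivariate version of
  Levy's uniqueness theorem.
\<close>

section \<open>Finite-dimensional laws are determined by characteristic functions\<close>

lemma law_under_density:
  assumes [measurable]: "V \<in> borel_measurable N"
    and r: "integrable N r" "\<And>x. 0 \<le> r x" "(\<integral>x. r x \<partial>N) = 1"
  defines "\<mu> \<equiv> distr (density N r) borel V"
  shows "real_distribution \<mu>"
    and "char \<mu> t = (\<integral>x. of_real (r x) * iexp (t * V x) \<partial>N)"
    and "B \<in> sets borel \<Longrightarrow> measure \<mu> B = (\<integral>x. r x * indicator B (V x) \<partial>N)"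
proof -
  have [measurable]: "r \<in> borel_measurable N" using r(1) by (rule borel_measurable_integrable)
  have em: "emeasure \<mu> A = ennreal (\<integral>x. r x * indicator A (V x) \<partial>N)" if [measurable]: "A \<in> sets borel" for A
  proof -
    have "integrable N (\<lambda>x. r x * indicator A (V x))"
      by (rule Bochner_Integration.integrable_bound[OF r(1)]) (auto simp: r(2) split: split_indicator)
    then show ?thesis
      unfolding \<mu>_def
      by (subst emeasure_distr) (auto simp: emeasure_density nn_integral_eq_integral[symmetric] r(2) mult.commute
          intro!: nn_integral_cong split: split_indicator)
  qed
  show "real_distribution \<mu>"
    unfolding real_distribution_def real_distribution_axioms_def
    using em[of UNIV] r(3) by (intro conjI prob_spaceI) (auto simp: \<mu>_def)
  show "char \<mu> t = (\<integral>x. of_real (r x) * iexp (t * V x) \<partial>N)"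
    unfolding char_def \<mu>_def
    by (subst integral_distr) (auto simp: integral_density r(2) scaleR_conv_of_real)
  show "measure \<mu> B = (\<integral>x. r x * indicator B (V x) \<partial>N)" if "B \<in> sets borel"
    using em[OF that] by (simp add: measure_def integral_nonneg r(2))
qed

lemma Levy_uniqueness_weighted:
  assumes [measurable]: "V \<in> borel_measurable N" "V' \<in> borel_measurable N'"
    and r: "integrable N r" "\<And>x. 0 \<le> r x"
    and r': "integrable N' r'" "\<And>x. 0 \<le> r' x"
    and char_eq: "\<And>t. (\<integral>x. of_real (r x) * iexp (t * V x) \<partial>N) = (\<integral>x. of_real (r' x) * iexp (t * V' x) \<partial>N')"
    and B: "B \<in> sets borel"
  shows "(\<integral>x. r x * indicator B (V x) \<partial>N) = (\<integral>x. r' x * indicator B (V' x) \<partial>N')"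
proof -
  define m where "m = (\<integral>x. r x \<partial>N)"
  have m': "(\<integral>x. r' x \<partial>N') = m"
    using char_eq[of 0] by (simp add: m_def)
  show ?thesis
  proof (cases "m = 0")
    case True
    have "AE x in N. r x = 0" "AE x in N'. r' x = 0"
      using True m' r r' integral_nonneg_eq_0_iff_AE[of N r] integral_nonneg_eq_0_iff_AE[of N' r']
      by (simp_all add: m_def)
    then have "(\<integral>x. r x * indicator B (V x) \<partial>N) = 0" "(\<integral>x. r' x * indicator B (V' x) \<partial>N') = 0"
      by (auto intro!: integral_eq_zero_AE elim!: AE_mp)
    then show ?thesis by simp
  next
    case False
    moreover have "m \<ge> 0" unfolding m_def using r(2) by (simp add: integral_nonneg_AE)
    ultimately have m: "m > 0" by simp
    have "measure (distr (density N (\<lambda>x. r x / m)) borel V) B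
        = measure (distr (density N' (\<lambda>x. r' x / m)) borel V') B"
    proof (rule arg_cong[where f="\<lambda>\<mu>. measure \<mu> B"], rule Levy_uniqueness)
      show "real_distribution (distr (density N (\<lambda>x. r x / m)) borel V)"
        "real_distribution (distr (density N' (\<lambda>x. r' x / m)) borel V')"
        using r r' m m' by (auto intro!: law_under_density(1) simp: m_def)
      show "char (distr (density N (\<lambda>x. r x / m)) borel V) = char (distr (density N' (\<lambda>x. r' x / m)) borel V')"
      proof
        fix t
        have "char (distr (density N (\<lambda>x. r x / m)) borel V) t = (\<integral>x. of_real (r x) * iexp (t * V x) \<partial>N) / m"
          using r m by (subst law_under_density(2)) (auto simp: m_def field_simps)
        also have "\<dots> = (\<integral>x. of_real (r' x) * iexp (t * V' x) \<partial>N') / m"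
          by (simp only: char_eq)
        also have "\<dots> = char (distr (density N' (\<lambda>x. r' x / m)) borel V') t"
          using r' m m' by (subst law_under_density(2)) (auto simp: field_simps)
        finally show "char (distr (density N (\<lambda>x. r x / m)) borel V) t = char (distr (density N' (\<lambda>x. r' x / m)) borel V') t" .
      qed
    qed
    then show ?thesis
      using r r' m m' B by (subst (asm) (1 2) law_under_density(3)) (auto simp: m_def)
  qed
qed

lemma integral_weighted_iexp:
  assumes q: "integrable N q" and [measurable]: "S \<in> borel_measurable N"
  shows "(\<integral>x. of_real (q x) * iexp (S x) \<partial>N) =
     of_real (\<integral>x. q x * cos (S x) \<partial>N) + \<i> * of_real (\<integral>x. q x * sin (S x) \<partial>N)"
proof -
  have [measurable]: "q \<in> borel_measurable N" using q by (rule borel_measurable_integrable)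
  have "integrable N (\<lambda>x. q x * cos (S x))" "integrable N (\<lambda>x. q x * sin (S x))"
    by (auto intro!: Bochner_Integration.integrable_bound[OF q] simp: abs_mult mult_left_le
        abs_cos_le_one abs_sin_le_one)
  then have "integrable N (\<lambda>x. complex_of_real (q x * cos (S x)))"
    "integrable N (\<lambda>x. \<i> * complex_of_real (q x * sin (S x)))"
    by (auto intro!: integrable_mult_right simp del: of_real_mult intro: integrable_of_real)
  moreover have "(\<lambda>x. of_real (q x) * iexp (S x)) =
      (\<lambda>x. complex_of_real (q x * cos (S x)) + \<i> * complex_of_real (q x * sin (S x)))"
    by (auto simp: cis_conv_exp[symmetric] cis.ctr complex_eq_iff)
  ultimately show ?thesis
    by (simp only: Bochner_Integration.integral_add integral_mult_right_zero integral_complex_of_real)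
qed

lemma integral_weighted_cos_shift:
  assumes q: "integrable N q"
    and [measurable]: "S \<in> borel_measurable N" "V \<in> borel_measurable N"
  shows "(\<integral>x. of_real (q x * (1 + cos (S x - \<theta>))) * iexp (t * V x) \<partial>N) =
     (\<integral>x. of_real (q x) * iexp (0 * S x + t * V x) \<partial>N)
   + (cis (- \<theta>) * (\<integral>x. of_real (q x) * iexp (1 * S x + t * V x) \<partial>N)
      + cis \<theta> * (\<integral>x. of_real (q x) * iexp ((- 1) * S x + t * V x) \<partial>N)) / 2"
proof -
  have [measurable]: "q \<in> borel_measurable N" using q by (rule borel_measurable_integrable)
  have int: "integrable N (\<lambda>x. of_real (q x) * iexp (a * S x + t * V x))" for a
    by (rule Bochner_Integration.integrable_bound[OF integrable_of_real[OF q, where 'a=complex]])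
      (auto simp: norm_mult)
  have "(\<lambda>x. of_real (q x * (1 + cos (S x - \<theta>))) * iexp (t * V x)) =
     (\<lambda>x. of_real (q x) * iexp (0 * S x + t * V x)
   + (cis (- \<theta>) * (of_real (q x) * iexp (1 * S x + t * V x))
      + cis \<theta> * (of_real (q x) * iexp ((- 1) * S x + t * V x))) / 2)"
    by (auto simp: cos_exp_eq cos_of_real[symmetric] cis_conv_exp exp_add[symmetric] field_simps
        simp del: cos_of_real)
  then show ?thesis using int[of 0] int[of 1] int[of "-1"]
    by (simp del: mult_zero_left mult_1 mult_minus_left of_real_minus)
qed

lemma integrable_mult_indicator_comp:
  fixes r U :: "'a \<Rightarrow> real"
  assumes "integrable L r" "U \<in> borel_measurable L" "B \<in> sets borel"
  shows "integrable L (\<lambda>x. r x * indicator B (U x))"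
  using assms by (intro Bochner_Integration.integrable_bound[OF assms(1)]) (auto split: split_indicator)

lemma integrable_mult_one_plus_cos:
  fixes r f :: "'a \<Rightarrow> real"
  assumes r: "integrable L r" "\<And>x. 0 \<le> r x" and [measurable]: "f \<in> borel_measurable L"
  shows "integrable L (\<lambda>x. r x * (1 + cos (f x)))"
proof (rule Bochner_Integration.integrable_bound[of _ "\<lambda>x. 2 * r x"])
  have [measurable]: "r \<in> borel_measurable L" using r(1) by (rule borel_measurable_integrable)
  show "(\<lambda>x. r x * (1 + cos (f x))) \<in> borel_measurable L" by measurable
  show "AE x in L. norm (r x * (1 + cos (f x))) \<le> norm (2 * r x)"
  proof (rule AE_I2)
    fix x
    have "0 \<le> 1 + cos (f x)" "1 + cos (f x) \<le> 2"
      using cos_ge_minus_one[of "f x"] cos_le_one[of "f x"] by linarith+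
    then show "norm (r x * (1 + cos (f x))) \<le> norm (2 * r x)"
      using r(2)[of x] by (simp add: abs_mult mult_left_mono mult.commute)
  qed
qed (use r in simp)

text \<open>
  The weight \<open>\<rho> (1 + cos (S - \<theta>))\<close> is nonnegative and its characteristic function is a
  combination of the given ones, so the one-dimensional uniqueness theorem applies to it.
\<close>

lemma integral_indicator_cos_eq_of_char_eq:
  fixes \<rho> S V :: "'a \<Rightarrow> real" and \<rho>' S' V' :: "'b \<Rightarrow> real"
  assumes meas[measurable]: "S \<in> borel_measurable N" "V \<in> borel_measurable N"
    "S' \<in> borel_measurable N'" "V' \<in> borel_measurable N'"
    and \<rho>: "integrable N \<rho>" "\<And>x. 0 \<le> \<rho> x"
    and \<rho>': "integrable N' \<rho>'" "\<And>x. 0 \<le> \<rho>' x"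
    and char_eq: "\<And>\<sigma> t. (\<integral>x. of_real (\<rho> x) * iexp (\<sigma> * S x + t * V x) \<partial>N)
                    = (\<integral>x. of_real (\<rho>' x) * iexp (\<sigma> * S' x + t * V' x) \<partial>N')"
    and B[measurable]: "B \<in> sets borel"
  shows "(\<integral>x. \<rho> x * indicator B (V x) * cos (S x - \<theta>) \<partial>N)
       = (\<integral>x. \<rho>' x * indicator B (V' x) * cos (S' x - \<theta>) \<partial>N')"
proof -
  have [measurable]: "\<rho> \<in> borel_measurable N" "\<rho>' \<in> borel_measurable N'"
    using \<rho>(1) \<rho>'(1) by (auto intro: borel_measurable_integrable)
  define w where "w x = \<rho> x * (1 + cos (S x - \<theta>))" for x
  define w' where "w' x = \<rho>' x * (1 + cos (S' x - \<theta>))" for x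
  have w: "integrable N w" "\<And>x. 0 \<le> w x" and w': "integrable N' w'" "\<And>x. 0 \<le> w' x"
  proof -
    have "0 \<le> 1 + cos y" for y :: real using cos_ge_minus_one[of y] by linarith
    then show "integrable N w" "\<And>x. 0 \<le> w x" "integrable N' w'" "\<And>x. 0 \<le> w' x"
      using \<rho> \<rho>' integrable_mult_one_plus_cos[OF \<rho>] integrable_mult_one_plus_cos[OF \<rho>']
      by (auto simp: w_def[abs_def] w'_def[abs_def])
  qed
  have plain: "(\<integral>x. \<rho> x * indicator B (V x) \<partial>N) = (\<integral>x. \<rho>' x * indicator B (V' x) \<partial>N')"
  proof (rule Levy_uniqueness_weighted[OF _ _ \<rho> \<rho>' _ B])
    show "(\<integral>x. of_real (\<rho> x) * iexp (t * V x) \<partial>N) = (\<integral>x. of_real (\<rho>' x) * iexp (t * V' x) \<partial>N')" for t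
      using char_eq[of 0 t] by simp
  qed simp_all
  have weighted: "(\<integral>x. w x * indicator B (V x) \<partial>N) = (\<integral>x. w' x * indicator B (V' x) \<partial>N')"
  proof (rule Levy_uniqueness_weighted[OF _ _ w w' _ B])
    show "(\<integral>x. of_real (w x) * iexp (t * V x) \<partial>N) = (\<integral>x. of_real (w' x) * iexp (t * V' x) \<partial>N')" for t
      unfolding w_def w'_def integral_weighted_cos_shift[OF \<rho>(1) meas(1,2)]
        integral_weighted_cos_shift[OF \<rho>'(1) meas(3,4)]
      by (simp only: char_eq)
  qed simp_all
  have int: "integrable N (\<lambda>x. \<rho> x * indicator B (V x))" "integrable N' (\<lambda>x. \<rho>' x * indicator B (V' x))"
    "integrable N (\<lambda>x. w x * indicator B (V x))" "integrable N' (\<lambda>x. w' x * indicator B (V' x))"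
    using \<rho>(1) \<rho>'(1) w(1) w'(1) by (auto intro: integrable_mult_indicator_comp)
  have "\<rho> x * indicator B (V x) * cos (S x - \<theta>) = w x * indicator B (V x) - \<rho> x * indicator B (V x)"
    "\<rho>' y * indicator B (V' y) * cos (S' y - \<theta>) = w' y * indicator B (V' y) - \<rho>' y * indicator B (V' y)"
    for x y by (simp_all add: w_def w'_def algebra_simps)
  then show ?thesis
    using plain weighted by (simp add: Bochner_Integration.integral_diff[OF int(3,1)]
        Bochner_Integration.integral_diff[OF int(4,2)])
qed

lemma integral_indicator_iexp_eq_of_char_eq:
  fixes \<rho> S V :: "'a \<Rightarrow> real" and \<rho>' S' V' :: "'b \<Rightarrow> real"
  assumes meas[measurable]: "S \<in> borel_measurable N" "V \<in> borel_measurable N"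
    "S' \<in> borel_measurable N'" "V' \<in> borel_measurable N'"
    and \<rho>: "integrable N \<rho>" "\<And>x. 0 \<le> \<rho> x"
    and \<rho>': "integrable N' \<rho>'" "\<And>x. 0 \<le> \<rho>' x"
    and char_eq: "\<And>\<sigma> t. (\<integral>x. of_real (\<rho> x) * iexp (\<sigma> * S x + t * V x) \<partial>N)
                    = (\<integral>x. of_real (\<rho>' x) * iexp (\<sigma> * S' x + t * V' x) \<partial>N')"
    and B[measurable]: "B \<in> sets borel"
  shows "(\<integral>x. of_real (\<rho> x * indicator B (V x)) * iexp (S x) \<partial>N)
       = (\<integral>x. of_real (\<rho>' x * indicator B (V' x)) * iexp (S' x) \<partial>N')"
proof -
  note cos_eq = integral_indicator_cos_eq_of_char_eq[OF meas \<rho> \<rho>' char_eq B]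
  have "(\<integral>x. \<rho> x * indicator B (V x) * cos (S x) \<partial>N) = (\<integral>x. \<rho>' x * indicator B (V' x) * cos (S' x) \<partial>N')"
    using cos_eq[of 0] by simp
  moreover have "(\<integral>x. \<rho> x * indicator B (V x) * sin (S x) \<partial>N) = (\<integral>x. \<rho>' x * indicator B (V' x) * sin (S' x) \<partial>N')"
    using cos_eq[of "pi / 2"] by (simp add: cos_diff)
  ultimately show ?thesis
    unfolding integral_weighted_iexp[OF integrable_mult_indicator_comp[OF \<rho>(1) meas(2) B] meas(1)]
      integral_weighted_iexp[OF integrable_mult_indicator_comp[OF \<rho>'(1) meas(4) B] meas(3)]
    by simp
qed

lemma integral_prod_indicator_eq_of_char_eq:
  fixes \<rho> :: "'a \<Rightarrow> real" and V :: "nat \<Rightarrow> 'a \<Rightarrow> real"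
    and \<rho>' :: "'b \<Rightarrow> real" and V' :: "nat \<Rightarrow> 'b \<Rightarrow> real"
  assumes [measurable]: "\<And>j. V j \<in> borel_measurable N" "\<And>j. V' j \<in> borel_measurable N'"
    and "integrable N \<rho>" "\<And>x. 0 \<le> \<rho> x" and "integrable N' \<rho>'" "\<And>x. 0 \<le> \<rho>' x"
    and "\<And>s. (\<integral>x. of_real (\<rho> x) * iexp (\<Sum>j<m. s j * V j x) \<partial>N)
            = (\<integral>x. of_real (\<rho>' x) * iexp (\<Sum>j<m. s j * V' j x) \<partial>N')"
    and "\<And>j. j < m \<Longrightarrow> A j \<in> sets borel"
  shows "(\<integral>x. \<rho> x * (\<Prod>j<m. indicator (A j) (V j x)) \<partial>N)
       = (\<integral>x. \<rho>' x * (\<Prod>j<m. indicator (A j) (V' j x)) \<partial>N')"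
  using assms(3-)
proof (induction m arbitrary: \<rho> \<rho>')
  case 0
  then show ?case using "0.prems"(5)[of "\<lambda>_. 0"] by simp
next
  case (Suc m)
  have A[measurable]: "A m \<in> sets borel" using Suc.prems(6) by simp
  define S where "S s x = (\<Sum>j<m. s j * V j x)" for s x
  define S' where "S' s x = (\<Sum>j<m. s j * V' j x)" for s x
  have [measurable]: "S s \<in> borel_measurable N" "S' s \<in> borel_measurable N'" for s
    unfolding S_def S'_def by measurable
  have "(\<integral>x. \<rho> x * indicator (A m) (V m x) * (\<Prod>j<m. indicator (A j) (V j x)) \<partial>N)
      = (\<integral>x. \<rho>' x * indicator (A m) (V' m x) * (\<Prod>j<m. indicator (A j) (V' j x)) \<partial>N')"
  proof (rule Suc.IH)
    show "integrable N (\<lambda>x. \<rho> x * indicator (A m) (V m x))"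
      "integrable N' (\<lambda>x. \<rho>' x * indicator (A m) (V' m x))"
      using Suc.prems(1,3) by (auto intro: integrable_mult_indicator_comp)
    fix s :: "nat \<Rightarrow> real"
    have "(\<integral>x. of_real (\<rho> x) * iexp (\<sigma> * S s x + t * V m x) \<partial>N)
        = (\<integral>x. of_real (\<rho>' x) * iexp (\<sigma> * S' s x + t * V' m x) \<partial>N')" for \<sigma> t
      using Suc.prems(5)[of "(\<lambda>j. \<sigma> * s j)(m := t)"]
      by (simp add: S_def S'_def sum_distrib_left mult.assoc)
    from integral_indicator_iexp_eq_of_char_eq[OF _ _ _ _ Suc.prems(1-4) this A]
    show "(\<integral>x. of_real (\<rho> x * indicator (A m) (V m x)) * iexp (\<Sum>j<m. s j * V j x) \<partial>N)
        = (\<integral>x. of_real (\<rho>' x * indicator (A m) (V' m x)) * iexp (\<Sum>j<m. s j * V' j x) \<partial>N')"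
      by (simp add: S_def S'_def)
  qed (use Suc.prems in auto)
  then show ?case by (simp add: mult_ac)
qed

lemma emeasure_distr_restrict_PiE:
  fixes V :: "nat \<Rightarrow> 'a \<Rightarrow> real"
  assumes "prob_space N" and V[measurable]: "\<And>j. V j \<in> borel_measurable N" and I: "finite I"
    and A: "\<And>j. j \<in> I \<Longrightarrow> A j \<in> sets borel"
  shows "emeasure (distr N (PiM I (\<lambda>_. borel)) (\<lambda>x. \<lambda>j\<in>I. V j x)) (Pi\<^sub>E I A)
     = ennreal (\<integral>x. (\<Prod>j\<in>I. indicator (A j) (V j x)) \<partial>N)"
proof -
  interpret N: prob_space N by fact
  have mv[measurable]: "(\<lambda>x. \<lambda>j\<in>I. V j x) \<in> measurable N (PiM I (\<lambda>_. borel))"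
    by (intro measurable_restrict) simp
  have PA: "Pi\<^sub>E I A \<in> sets (PiM I (\<lambda>_. borel))"
    using A by (intro sets_PiM_I_finite I) auto
  have ind: "indicator ((\<lambda>x. \<lambda>j\<in>I. V j x) -` Pi\<^sub>E I A \<inter> space N) x = ennreal (\<Prod>j\<in>I. indicator (A j) (V j x))"
    if "x \<in> space N" for x
    using that I by (auto simp: indicator_def PiE_iff prod_zero)
  have m: "(\<lambda>x. \<Prod>j\<in>I. indicator (A j) (V j x) :: real) \<in> borel_measurable N"
    using A by (intro borel_measurable_prod borel_measurable_indicator') auto
  have "emeasure (distr N (PiM I (\<lambda>_. borel)) (\<lambda>x. \<lambda>j\<in>I. V j x)) (Pi\<^sub>E I A)
      = (\<integral>\<^sup>+x. indicator ((\<lambda>x. \<lambda>j\<in>I. V j x) -` Pi\<^sub>E I A \<inter> space N) x \<partial>N)"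
    using measurable_sets[OF mv PA] by (simp add: emeasure_distr[OF mv PA])
  also have "\<dots> = (\<integral>\<^sup>+x. ennreal (\<Prod>j\<in>I. indicator (A j) (V j x)) \<partial>N)"
    by (intro nn_integral_cong ind)
  also have "\<dots> = ennreal (\<integral>x. (\<Prod>j\<in>I. indicator (A j) (V j x)) \<partial>N)"
    by (intro nn_integral_eq_integral N.integrable_const_bound[of _ 1])
      (auto simp: m abs_prod prod_nonneg intro!: prod_le_1)
  finally show ?thesis .
qed

lemma Levy_uniqueness_multivariate:
  fixes V :: "nat \<Rightarrow> 'a \<Rightarrow> real" and V' :: "nat \<Rightarrow> 'b \<Rightarrow> real"
  assumes N: "prob_space N" and N': "prob_space N'"
    and V[measurable]: "\<And>j. V j \<in> borel_measurable N" and V'[measurable]: "\<And>j. V' j \<in> borel_measurable N'"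
    and char_eq: "\<And>s. (\<integral>x. iexp (\<Sum>j<m. s j * V j x) \<partial>N) = (\<integral>x. iexp (\<Sum>j<m. s j * V' j x) \<partial>N')"
  shows "distr N (PiM {..<m} (\<lambda>_. borel)) (\<lambda>x. \<lambda>j\<in>{..<m}. V j x)
       = distr N' (PiM {..<m} (\<lambda>_. borel)) (\<lambda>x. \<lambda>j\<in>{..<m}. V' j x)"
proof (rule measure_eqI_PiM_finite[where A="\<lambda>_. space (PiM {..<m} (\<lambda>_. borel))"])
  interpret N: prob_space N by fact
  interpret N': prob_space N' by fact
  fix A :: "nat \<Rightarrow> real set" assume A: "\<And>j. j \<in> {..<m} \<Longrightarrow> A j \<in> sets borel"
  have "(\<integral>x. 1 * (\<Prod>j<m. indicator (A j) (V j x)) \<partial>N) = (\<integral>x. (1::real) * (\<Prod>j<m. indicator (A j) (V' j x)) \<partial>N')"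
    by (rule integral_prod_indicator_eq_of_char_eq[where \<rho>="\<lambda>_. 1" and \<rho>'="\<lambda>_. 1"])
      (use A char_eq in auto)
  moreover have "emeasure (distr N (PiM {..<m} (\<lambda>_. borel)) (\<lambda>x. \<lambda>j\<in>{..<m}. V j x)) (Pi\<^sub>E {..<m} A)
      = ennreal (\<integral>x. (\<Prod>j<m. indicator (A j) (V j x)) \<partial>N)"
    by (rule emeasure_distr_restrict_PiE[OF N V finite_lessThan]) (rule A)
  moreover have "emeasure (distr N' (PiM {..<m} (\<lambda>_. borel)) (\<lambda>x. \<lambda>j\<in>{..<m}. V' j x)) (Pi\<^sub>E {..<m} A)
      = ennreal (\<integral>x. (\<Prod>j<m. indicator (A j) (V' j x)) \<partial>N')"
    by (rule emeasure_distr_restrict_PiE[OF N' V' finite_lessThan]) (rule A)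
  ultimately show "emeasure (distr N (PiM {..<m} (\<lambda>_. borel)) (\<lambda>x. \<lambda>j\<in>{..<m}. V j x)) (Pi\<^sub>E {..<m} A)
      = emeasure (distr N' (PiM {..<m} (\<lambda>_. borel)) (\<lambda>x. \<lambda>j\<in>{..<m}. V' j x)) (Pi\<^sub>E {..<m} A)"
    by simp
next
  show "range (\<lambda>_. space (PiM {..<m} (\<lambda>_. borel))) \<subseteq> prod_algebra {..<m} (\<lambda>_. borel)"
    by (auto simp: space_PiM intro!: prod_algebraI_finite)
qed (use N in \<open>auto simp: emeasure_distr prob_space_def finite_measure.emeasure_finite\<close>)

section \<open>Orthogonal decompositions in \<open>L\<^sup>2(\<real>)\<close>\<close>

lemma L2_borel_measurable[measurable_dest]: "f \<in> L2 \<Longrightarrow> f \<in> borel_measurable lborel"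
  by (simp add: L2_def)

lemma L2_integrable_square: "f \<in> L2 \<Longrightarrow> integrable lborel (\<lambda>x. (f x)\<^sup>2)"
  by (simp add: L2_def)

lemma L2_integrable_mult:
  assumes "f \<in> L2" "g \<in> L2"
  shows "integrable lborel (\<lambda>x. f x * g x)"
proof (rule Bochner_Integration.integrable_bound)
  show "integrable lborel (\<lambda>x. (f x)\<^sup>2 + (g x)\<^sup>2)"
    using assms by (intro Bochner_Integration.integrable_add L2_integrable_square)
  show "(\<lambda>x. f x * g x) \<in> borel_measurable lborel" using assms by measurable
  have "\<bar>f x * g x\<bar> \<le> (f x)\<^sup>2 + (g x)\<^sup>2" for x
  proof -
    have "2 * (\<bar>f x\<bar> * \<bar>g x\<bar>) \<le> (f x)\<^sup>2 + (g x)\<^sup>2"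
      using sum_squares_bound[of "\<bar>f x\<bar>" "\<bar>g x\<bar>"] by (simp add: mult.assoc)
    moreover have "0 \<le> \<bar>f x\<bar> * \<bar>g x\<bar>" by simp
    ultimately show ?thesis unfolding abs_mult by linarith
  qed
  then show "AE x in lborel. norm (f x * g x) \<le> norm ((f x)\<^sup>2 + (g x)\<^sup>2)"
    by simp
qed

lemma L2_lincomb:
  assumes "f \<in> L2" "g \<in> L2"
  shows "(\<lambda>x. a * f x + b * g x) \<in> L2"
proof -
  have "(\<lambda>x. (a * f x + b * g x)\<^sup>2) = (\<lambda>x. a\<^sup>2 * (f x)\<^sup>2 + b\<^sup>2 * (g x)\<^sup>2 + 2 * (a * b) * (f x * g x))"
    by (auto simp: power2_eq_square algebra_simps)
  moreover have "integrable lborel (\<lambda>x. a\<^sup>2 * (f x)\<^sup>2 + b\<^sup>2 * (g x)\<^sup>2 + 2 * (a * b) * (f x * g x))"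
    using assms by (intro Bochner_Integration.integrable_add integrable_mult_right L2_integrable_square
        L2_integrable_mult)
  moreover have "(\<lambda>x. a * f x + b * g x) \<in> borel_measurable lborel"
    using assms by measurable
  ultimately show ?thesis by (simp add: L2_def)
qed

lemma L2_scale: "f \<in> L2 \<Longrightarrow> (\<lambda>x. a * f x) \<in> L2"
  using L2_lincomb[of f f a 0] by simp

lemma L2_sum:
  fixes n :: nat
  shows "(\<And>j. j < n \<Longrightarrow> f j \<in> L2) \<Longrightarrow> (\<lambda>x. \<Sum>j<n. s j * f j x) \<in> L2"
proof (induction n)
  case 0
  then show ?case by (simp add: L2_def)
next
  case (Suc n)
  then show ?case using L2_lincomb[of "\<lambda>x. \<Sum>j<n. s j * f j x" "f n" 1 "s n"] by simp
qed

lemma ip_commute: "ip f g = ip g f"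
  by (simp add: ip_def mult.commute)

lemma ip_self_nonneg: "0 \<le> ip f f"
  unfolding ip_def by (rule integral_nonneg_AE) simp

lemma ip_scale_left: "ip (\<lambda>x. a * f x) g = a * ip f g"
  by (simp add: ip_def mult.assoc)

lemma ip_scale_right: "ip g (\<lambda>x. a * f x) = a * ip g f"
  by (simp add: ip_def mult.left_commute)

lemma ip_lincomb_left:
  assumes "f \<in> L2" "g \<in> L2" "h \<in> L2"
  shows "ip (\<lambda>x. a * f x + b * g x) h = a * ip f h + b * ip g h"
  unfolding ip_def using L2_integrable_mult[OF assms(1,3)] L2_integrable_mult[OF assms(2,3)]
  by (simp add: algebra_simps)

lemma ip_lincomb_right:
  "f \<in> L2 \<Longrightarrow> g \<in> L2 \<Longrightarrow> h \<in> L2 \<Longrightarrow> ip h (\<lambda>x. a * f x + b * g x) = a * ip h f + b * ip h g"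
  using ip_lincomb_left[of f g h a b] by (simp add: ip_commute)

lemma ip_lincomb_self_orthogonal:
  assumes "f \<in> L2" "g \<in> L2" "ip f g = 0"
  shows "ip (\<lambda>x. a * f x + b * g x) (\<lambda>x. a * f x + b * g x) = a\<^sup>2 * ip f f + b\<^sup>2 * ip g g"
proof -
  have fg: "(\<lambda>x. a * f x + b * g x) \<in> L2" using assms(1,2) by (rule L2_lincomb)
  have "ip (\<lambda>x. a * f x + b * g x) (\<lambda>x. a * f x + b * g x)
      = a * (a * ip f f + b * ip f g) + b * (a * ip g f + b * ip g g)"
    using assms fg by (simp add: ip_lincomb_left ip_lincomb_right)
  then show ?thesis using assms(3) by (simp add: ip_commute[of g f] power2_eq_square)
qed

lemma ip_sum_left:
  fixes n :: nat
  shows "(\<And>j. j < n \<Longrightarrow> f j \<in> L2) \<Longrightarrow> h \<in> L2 \<Longrightarrow> ip (\<lambda>x. \<Sum>j<n. s j * f j x) h = (\<Sum>j<n. s j * ip (f j) h)"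
proof (induction n)
  case 0
  then show ?case by (simp add: ip_def)
next
  case (Suc n)
  then show ?case
    using ip_lincomb_left[of "\<lambda>x. \<Sum>j<n. s j * f j x" "f n" h 1 "s n"] by (simp add: L2_sum)
qed

lemma ip_self_eq_0_imp_AE:
  assumes "f \<in> L2" "ip f f = 0"
  shows "AE x in lborel. f x = 0"
  using assms integral_nonneg_eq_0_iff_AE[of lborel "\<lambda>x. (f x)\<^sup>2"]
  by (simp add: L2_def ip_def power2_eq_square)

lemma ip_AE_0_right: "AE x in lborel. g x = 0 \<Longrightarrow> ip f g = 0"
  unfolding ip_def by (intro integral_eq_zero_AE) (auto elim: AE_mp)

lemma gram_orthogonal_direction:
  fixes n :: nat and f :: "nat \<Rightarrow> real \<Rightarrow> real"
  assumes L2: "\<And>j. j < Suc n \<Longrightarrow> f j \<in> L2"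
    and indep: "\<And>q. AE x in lborel. (\<Sum>j<Suc n. q j * f j x) = 0 \<Longrightarrow> \<forall>j<Suc n. q j = 0"
    and proj: "\<forall>k<n. ip (f k) (\<lambda>x. \<Sum>j<n. q' j * f j x) = ip (f k) (f n)"
  defines "q \<equiv> \<lambda>j. if j = n then 1 else - q' j"
  shows "\<forall>k<n. ip (f k) (\<lambda>x. \<Sum>j<Suc n. q j * f j x) = 0"
    and "ip (f n) (\<lambda>x. \<Sum>j<Suc n. q j * f j x) \<noteq> 0"
proof -
  define P where "P x = (\<Sum>j<n. q' j * f j x)" for x
  define w where "w x = 1 * f n x + (- 1) * P x" for x
  have w_eq: "w = (\<lambda>x. \<Sum>j<Suc n. q j * f j x)"
    by (auto simp: w_def P_def q_def sum_negf[symmetric] intro!: sum.cong)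
  have fn: "f n \<in> L2" and P: "P \<in> L2"
    using L2 by (auto simp: P_def[abs_def] L2_sum)
  have w: "w \<in> L2" unfolding w_def[abs_def] by (rule L2_lincomb[OF fn P])
  have fk_w: "ip (f k) w = 0" if "k < n" for k
  proof -
    have "f k \<in> L2" using L2 that by simp
    then show ?thesis
      unfolding w_def[abs_def] ip_lincomb_right[OF fn P \<open>f k \<in> L2\<close>] using proj that by (simp add: P_def[abs_def])
  qed
  then show "\<forall>k<n. ip (f k) (\<lambda>x. \<Sum>j<Suc n. q j * f j x) = 0" by (simp add: w_eq)
  have "ip P w = 0"
    using L2 w fk_w by (simp add: P_def[abs_def] ip_sum_left)
  then have "ip (f n) w = ip w w"
    using ip_lincomb_left[OF fn P w, of 1 "- 1"] by (simp add: w_def[abs_def])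
  moreover have "ip w w \<noteq> 0"
  proof
    assume "ip w w = 0"
    then have "AE x in lborel. (\<Sum>j<Suc n. q j * f j x) = 0"
      using ip_self_eq_0_imp_AE[OF w] by (simp add: w_eq)
    then show False using indep[of q] by (auto simp: q_def)
  qed
  ultimately show "ip (f n) (\<lambda>x. \<Sum>j<Suc n. q j * f j x) \<noteq> 0" by (simp add: w_eq)
qed

lemma gram_system_solvable:
  fixes n :: nat and f :: "nat \<Rightarrow> real \<Rightarrow> real"
  assumes "\<And>j. j < n \<Longrightarrow> f j \<in> L2"
    and "\<And>q. AE x in lborel. (\<Sum>j<n. q j * f j x) = 0 \<Longrightarrow> \<forall>j<n. q j = 0"
  shows "\<exists>q. \<forall>k<n. ip (f k) (\<lambda>x. \<Sum>j<n. q j * f j x) = b k"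
  using assms
proof (induction n arbitrary: b)
  case (Suc n)
  have L2: "\<And>j. j < n \<Longrightarrow> f j \<in> L2" using Suc.prems(1) by (meson less_SucI)
  have indep: "\<forall>j<n. q j = 0" if "AE x in lborel. (\<Sum>j<n. q j * f j x) = 0" for q
  proof -
    have "(\<Sum>j<n. (q(n := 0)) j * f j x) = (\<Sum>j<n. q j * f j x)" for x by (intro sum.cong) auto
    then have "\<forall>j<Suc n. (q(n := 0)) j = 0" using that by (intro Suc.prems(2)) simp
    then show ?thesis by (auto dest: less_SucI)
  qed
  have IH: "\<exists>q. \<forall>k<n. ip (f k) (\<lambda>x. \<Sum>j<n. q j * f j x) = c k" for c
    by (rule Suc.IH[OF L2 indep])
  obtain q' where "\<forall>k<n. ip (f k) (\<lambda>x. \<Sum>j<n. q' j * f j x) = ip (f k) (f n)"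
    using IH[of "\<lambda>k. ip (f k) (f n)"] by blast
  note w = gram_orthogonal_direction[OF Suc.prems this]
  define w where "w x = (\<Sum>j<Suc n. (if j = n then 1 else - q' j) * f j x)" for x
  obtain q0 where q0: "\<forall>k<n. ip (f k) (\<lambda>x. \<Sum>j<n. q0 j * f j x) = b k"
    using IH[of b] by blast
  define U where "U x = (\<Sum>j<n. q0 j * f j x)" for x
  define t where "t = (b n - ip (f n) U) / ip (f n) w"
  define q where "q j = (if j < n then q0 j else 0) + t * (if j = n then 1 else - q' j)" for j
  have U: "U \<in> L2" unfolding U_def[abs_def] by (rule L2_sum) (rule L2)
  have w_L2: "w \<in> L2" unfolding w_def[abs_def] by (rule L2_sum) (rule Suc.prems(1))
  have q_sum: "(\<lambda>x. \<Sum>j<Suc n. q j * f j x) = (\<lambda>x. 1 * U x + t * w x)"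
    by (simp add: q_def U_def w_def distrib_right sum.distrib sum_distrib_left sum_negf right_diff_distrib mult.assoc)
  have "ip (f k) (\<lambda>x. \<Sum>j<Suc n. q j * f j x) = b k" if k: "k < Suc n" for k
  proof -
    have "ip (f k) (\<lambda>x. \<Sum>j<Suc n. q j * f j x) = ip (f k) U + t * ip (f k) w"
      unfolding q_sum ip_lincomb_right[OF U w_L2 Suc.prems(1)[OF k]] by simp
    also have "\<dots> = b k"
    proof (cases "k < n")
      case True
      then show ?thesis using q0 w(1) by (simp add: U_def[abs_def] w_def[abs_def])
    next
      case False
      then have "k = n" using k by simp
      then show ?thesis using w(2) by (simp add: t_def w_def[abs_def])
    qed
    finally show ?thesis .
  qed
  then show ?case by blast
qed simp

lemma perp_eq_lincomb: "perp \<eta> f = (\<lambda>x. 1 * f x + (- ip f \<eta>) * \<eta> x)"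
  by (simp add: perp_def)

lemma perp_in_L2: "f \<in> L2 \<Longrightarrow> \<eta> \<in> L2 \<Longrightarrow> perp \<eta> f \<in> L2"
  unfolding perp_eq_lincomb by (rule L2_lincomb)

lemma perp_orthogonal: "f \<in> L2 \<Longrightarrow> \<eta> \<in> L2 \<Longrightarrow> ip \<eta> \<eta> = 1 \<Longrightarrow> ip (perp \<eta> f) \<eta> = 0"
  unfolding perp_eq_lincomb by (subst ip_lincomb_left) auto

lemma L2_lin_indep_perp:
  assumes indep: "L2_lin_indep (\<eta> # xs)"
    and AE_0: "AE x in lborel. (\<Sum>j<length xs. q j * perp \<eta> (xs ! j) x) = 0"
  shows "\<forall>j<length xs. q j = 0"
proof -
  define c where "c k = (if k = 0 then - (\<Sum>j<length xs. q j * ip (xs ! j) \<eta>) else q (k - 1))" for k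
  have "(\<Sum>k<length (\<eta> # xs). c k * ((\<eta> # xs) ! k) x) = (\<Sum>j<length xs. q j * perp \<eta> (xs ! j) x)" for x
    by (simp only: length_Cons sum.lessThan_Suc_shift nth_Cons_0 nth_Cons_Suc)
      (simp add: c_def perp_def algebra_simps sum_subtractf sum_distrib_right sum_distrib_left)
  then have "\<forall>k<length (\<eta> # xs). c k = 0"
    using indep AE_0 by (simp add: L2_lin_indep_def)
  then show ?thesis by (auto simp: c_def)
qed

lemma exists_perp_dual_vector:
  assumes \<eta>: "\<eta> \<in> L2" "ip \<eta> \<eta> = 1" and xs: "set xs \<subseteq> L2" and indep: "L2_lin_indep (\<eta> # xs)"
  obtains u where "u \<in> L2" "ip u \<eta> = 0" "\<And>k. k < length xs \<Longrightarrow> ip (perp \<eta> (xs ! k)) u = ip (xs ! k) \<eta>"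
proof -
  define p where "p k = perp \<eta> (xs ! k)" for k
  have p: "p k \<in> L2" "ip (p k) \<eta> = 0" if "k < length xs" for k
  proof -
    have "xs ! k \<in> L2" using that xs by auto
    then show "p k \<in> L2" "ip (p k) \<eta> = 0" using \<eta> by (simp_all add: p_def perp_in_L2 perp_orthogonal)
  qed
  obtain q where q: "\<forall>k<length xs. ip (p k) (\<lambda>x. \<Sum>j<length xs. q j * p j x) = ip (xs ! k) \<eta>"
    using gram_system_solvable[of "length xs" p "\<lambda>k. ip (xs ! k) \<eta>"] p(1) L2_lin_indep_perp[OF indep]
    by (auto simp: p_def)
  show ?thesis
  proof (rule that)
    show "(\<lambda>x. \<Sum>j<length xs. q j * p j x) \<in> L2" "ip (\<lambda>x. \<Sum>j<length xs. q j * p j x) \<eta> = 0"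
      using p \<eta> by (simp_all add: L2_sum ip_sum_left)
  qed (use q in \<open>simp add: p_def\<close>)
qed

lemma perp_decomposition:
  fixes \<eta> :: "real \<Rightarrow> real" and xs :: "(real \<Rightarrow> real) list"
  assumes \<eta>: "\<eta> \<in> L2" "ip \<eta> \<eta> = 1" and xs: "set xs \<subseteq> L2" and indep: "L2_lin_indep (\<eta> # xs)"
  obtains g :: "nat \<Rightarrow> real \<Rightarrow> real" and e e' :: "real \<Rightarrow> real" and c :: "nat \<Rightarrow> real" and \<sigma> :: real
  where "1 \<le> \<sigma>" "e \<in> L2" "ip e e = 1" "e' \<in> L2" "ip e' e' = 1"
    and "\<And>k. k < length xs \<Longrightarrow> g k \<in> L2 \<and> ip (g k) e = 0 \<and> ip (g k) e' = 0"
    and "\<And>k. k < length xs \<Longrightarrow> perp \<eta> (xs ! k) = (\<lambda>x. g k x + c k * e x)"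
    and "\<And>k. k < length xs \<Longrightarrow> xs ! k = (\<lambda>x. g k x + \<sigma> * c k * e' x)"
proof -
  define d where "d = length xs"
  define a where "a k = ip (xs ! k) \<eta>" for k
  define p where "p k = perp \<eta> (xs ! k)" for k
  have \<xi>: "xs ! k \<in> L2" if "k < d" for k using that xs by (auto simp: d_def)
  have p: "p k \<in> L2" "ip (p k) \<eta> = 0" if "k < d" for k
    using \<xi>[OF that] \<eta> by (simp_all add: p_def perp_in_L2 perp_orthogonal)
  have p_eq: "p k x = (xs ! k) x - a k * \<eta> x" for k x by (simp add: p_def a_def perp_def)
  obtain u where u: "u \<in> L2" "ip u \<eta> = 0" and pu: "\<And>k. k < d \<Longrightarrow> ip (p k) u = a k"
    using exists_perp_dual_vector[OF \<eta> xs indep] unfolding a_def p_def d_def by blast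
  show ?thesis
  proof (cases "ip u u = 0")
    case True
    \<comment> \<open>then every \<open>a\<^sub>k\<close> vanishes, \<open>P\<^sub>\<bottom>\<close> fixes every \<open>\<xi>\<^sub>k\<close>, and \<open>\<eta>\<close> serves as \<open>e\<close> and \<open>e'\<close>\<close>
    then have "a k = 0" if "k < d" for k
      using ip_AE_0_right[OF ip_self_eq_0_imp_AE[OF u(1)]] pu[OF that] by simp
    then show ?thesis
      using \<eta> \<xi> by (intro that[of 1 \<eta> \<eta> "\<lambda>k. xs ! k" "\<lambda>_. 0"]) (auto simp: d_def a_def perp_def)
  next
    case False
    define \<beta> where "\<beta> = sqrt (ip u u)"
    have \<beta>: "\<beta> > 0" "\<beta>\<^sup>2 = ip u u" using False ip_self_nonneg[of u] by (auto simp: \<beta>_def)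
    define e where "e x = u x / \<beta>" for x
    define \<sigma> where "\<sigma> = sqrt (1 + \<beta>\<^sup>2)"
    define e' where "e' x = (1 / \<sigma>) * e x + (\<beta> / \<sigma>) * \<eta> x" for x
    define c where "c k = a k / \<beta>" for k
    define g where "g k x = 1 * p k x + (- c k) * e x" for k x
    \<comment> \<open>\<open>a\<^sub>k = \<beta> c\<^sub>k\<close>, so \<open>\<xi>\<^sub>k = g\<^sub>k + c\<^sub>k (e + \<beta> \<eta>) = g\<^sub>k + \<sigma> c\<^sub>k e'\<close>\<close>
    have \<sigma>: "1 \<le> \<sigma>" "\<sigma>\<^sup>2 = 1 + \<beta>\<^sup>2" by (simp_all add: \<sigma>_def)
    have e: "e \<in> L2" "ip e e = 1" "ip e \<eta> = 0"
      using u \<beta> L2_scale[OF u(1), of "1 / \<beta>"] ip_scale_left[of "1 / \<beta>" u] ip_scale_right[of _ "1 / \<beta>" u]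
      by (auto simp: e_def[abs_def] power2_eq_square)
    have e': "e' \<in> L2" "ip e' e' = 1"
    proof -
      show "e' \<in> L2" unfolding e'_def[abs_def] by (rule L2_lincomb[OF e(1) \<eta>(1)])
      have "1 + \<beta>\<^sup>2 \<noteq> 0" using zero_le_power2[of \<beta>] by linarith
      then show "ip e' e' = 1"
        unfolding e'_def[abs_def] ip_lincomb_self_orthogonal[OF e(1) \<eta>(1) e(3)]
        using e \<eta> \<sigma> by (simp add: power_divide add_divide_distrib[symmetric])
    qed
    have pe: "ip (p k) e = c k" if "k < d" for k
      using pu[OF that] ip_scale_right[of "p k" "1 / \<beta>" u] by (simp add: e_def[abs_def] c_def)
    have g_eq: "g k = (\<lambda>x. 1 * p k x + (- c k) * e x)" for k
      by (rule ext) (simp only: g_def)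
    have g: "g k \<in> L2" "ip (g k) e = 0" "ip (g k) e' = 0" if "k < d" for k
    proof -
      show gL2: "g k \<in> L2" unfolding g_eq by (rule L2_lincomb[OF p(1)[OF that] e(1)])
      show ge: "ip (g k) e = 0"
        unfolding g_eq ip_lincomb_left[OF p(1)[OF that] e(1) e(1)] using e pe[OF that] by simp
      have "ip (g k) \<eta> = 0"
        unfolding g_eq ip_lincomb_left[OF p(1)[OF that] e(1) \<eta>(1)] using p(2)[OF that] e by simp
      then show "ip (g k) e' = 0"
        unfolding e'_def[abs_def] ip_lincomb_right[OF e(1) \<eta>(1) gL2] using ge by simp
    qed
    show ?thesis
    proof (rule that[OF \<sigma>(1) e(1,2) e'])
      show "g k \<in> L2 \<and> ip (g k) e = 0 \<and> ip (g k) e' = 0" if "k < length xs" for k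
        using g that by (simp add: d_def)
      show "perp \<eta> (xs ! k) = (\<lambda>x. g k x + c k * e x)" for k
        by (auto simp: g_def p_def)
      show "xs ! k = (\<lambda>x. g k x + \<sigma> * c k * e' x)" for k
        using \<beta> \<sigma> by (auto simp: g_def e'_def p_eq c_def field_simps)
    qed
  qed
qed

section \<open>Polynomials and \<open>L\<^sup>p\<close> norms\<close>

lemma prod_power_le_one_plus_sum_power:
  fixes y :: "nat \<Rightarrow> real"
  assumes y: "\<And>k. k < d \<Longrightarrow> 1 \<le> y k"
  shows "(\<Prod>k<d. y k ^ E) \<le> 1 + (\<Sum>k<d. y k ^ (E * d))"
proof (cases "d = 0")
  case False
  define m where "m = Max (y ` {..<d})"
  have "m \<in> y ` {..<d}" using False unfolding m_def by (intro Max_in) auto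
  then obtain k0 where k0: "k0 < d" "y k0 = m" by auto
  have "y k \<le> m" if "k < d" for k using that by (auto simp: m_def)
  then have "(\<Prod>k<d. y k ^ E) \<le> (\<Prod>k<d. m ^ E)"
    using y by (intro prod_mono) (auto intro: power_mono order_trans[OF zero_le_one])
  also have "\<dots> = y k0 ^ (E * d)" by (simp add: k0 power_mult)
  also have "\<dots> \<le> (\<Sum>k<d. y k ^ (E * d))"
    using k0 y by (intro member_le_sum) (auto intro: order_trans[OF zero_le_one])
  finally show ?thesis by simp
qed simp

lemma poly_eval_bound:
  assumes "is_poly_coeffs c"
  obtains A D where "0 \<le> A" "\<And>x. cmod (poly_eval c d x) \<le> A * (\<Prod>k<d. (1 + \<bar>x k\<bar>) ^ D)"
proof
  let ?S = "{\<alpha>. c \<alpha> \<noteq> 0}"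
  define D where "D = (\<Sum>\<alpha>\<in>?S. \<Sum>k<d. \<alpha> k)"
  have fin: "finite ?S" using assms by (simp add: is_poly_coeffs_def)
  show "0 \<le> (\<Sum>\<alpha>\<in>?S. cmod (c \<alpha>))" by (intro sum_nonneg) auto
  fix x
  have monomial: "cmod (\<Prod>k<d. complex_of_real (x k) ^ \<alpha> k) \<le> (\<Prod>k<d. (1 + \<bar>x k\<bar>) ^ D)"
    if "\<alpha> \<in> ?S" for \<alpha>
  proof -
    have "cmod (\<Prod>k<d. complex_of_real (x k) ^ \<alpha> k) = (\<Prod>k<d. \<bar>x k\<bar> ^ \<alpha> k)"
      by (simp add: prod_norm[symmetric] norm_power)
    also have "\<dots> \<le> (\<Prod>k<d. (1 + \<bar>x k\<bar>) ^ D)"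
    proof (rule prod_mono)
      fix k assume k: "k \<in> {..<d}"
      have "\<alpha> k \<le> (\<Sum>k<d. \<alpha> k)" using k by (intro member_le_sum) auto
      also have "\<dots> \<le> D" unfolding D_def using fin that by (intro member_le_sum) auto
      finally have "\<alpha> k \<le> D" .
      then have "\<bar>x k\<bar> ^ \<alpha> k \<le> (1 + \<bar>x k\<bar>) ^ D"
        by (intro order_trans[OF power_mono power_increasing]) auto
      then show "0 \<le> \<bar>x k\<bar> ^ \<alpha> k \<and> \<bar>x k\<bar> ^ \<alpha> k \<le> (1 + \<bar>x k\<bar>) ^ D" by simp
    qed
    finally show ?thesis .
  qed
  have "cmod (poly_eval c d x) \<le> (\<Sum>\<alpha>\<in>?S. cmod (c \<alpha>) * cmod (\<Prod>k<d. complex_of_real (x k) ^ \<alpha> k))"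
    unfolding poly_eval_def by (rule order_trans[OF norm_sum]) (simp add: norm_mult)
  also have "\<dots> \<le> (\<Sum>\<alpha>\<in>?S. cmod (c \<alpha>) * (\<Prod>k<d. (1 + \<bar>x k\<bar>) ^ D))"
    by (intro sum_mono mult_left_mono monomial) auto
  finally show "cmod (poly_eval c d x) \<le> (\<Sum>\<alpha>\<in>?S. cmod (c \<alpha>)) * (\<Prod>k<d. (1 + \<bar>x k\<bar>) ^ D)"
    by (simp add: sum_distrib_right)
qed

lemma poly_eval_powr_bound:
  assumes "is_poly_coeffs c" and p: "0 < p"
  obtains B N where "\<And>x. cmod (poly_eval c d x) powr p \<le> B * (1 + (\<Sum>k<d. (1 + \<bar>x k\<bar>) ^ N))"
proof -
  obtain A D where A: "0 \<le> A" and bound: "\<And>x. cmod (poly_eval c d x) \<le> A * (\<Prod>k<d. (1 + \<bar>x k\<bar>) ^ D)"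
    using poly_eval_bound[OF assms(1)] by blast
  define m where "m = nat \<lceil>p\<rceil>"
  show ?thesis
  proof (rule that)
    fix x
    define Z where "Z = (A + 1) * (\<Prod>k<d. (1 + \<bar>x k\<bar>) ^ D)"
    have P1: "1 \<le> (\<Prod>k<d. (1 + \<bar>x k\<bar>) ^ D)" by (intro prod_ge_1) simp
    then have Z1: "1 \<le> Z" using A by (simp add: Z_def mult_ge1_I)
    have "cmod (poly_eval c d x) \<le> Z"
      using bound[of x] P1 unfolding Z_def by (smt (verit) mult_right_mono)
    then have "cmod (poly_eval c d x) powr p \<le> Z powr p" using p by (intro powr_mono2) auto
    also have "\<dots> \<le> Z powr real m" using Z1 by (intro powr_mono) (auto simp: m_def, linarith)
    also have "\<dots> = (A + 1) ^ m * (\<Prod>k<d. (1 + \<bar>x k\<bar>) ^ (D * m))"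
      using Z1 by (simp add: powr_realpow Z_def power_mult_distrib prod_power_distrib power_mult)
    also have "\<dots> \<le> (A + 1) ^ m * (1 + (\<Sum>k<d. (1 + \<bar>x k\<bar>) ^ (D * m * d)))"
      using A by (intro mult_left_mono prod_power_le_one_plus_sum_power) auto
    finally show "cmod (poly_eval c d x) powr p \<le> (A + 1) ^ m * (1 + (\<Sum>k<d. (1 + \<bar>x k\<bar>) ^ (D * m * d)))" .
  qed
qed

lemma poly_eval_measurable[measurable]:
  "(\<lambda>x. poly_eval c d x) \<in> borel_measurable (PiM {..<d} (\<lambda>_. borel))"
  unfolding poly_eval_def by measurable

lemma poly_eval_cong: "(\<And>k. k < d \<Longrightarrow> x k = y k) \<Longrightarrow> poly_eval c d x = poly_eval c d y"
  unfolding poly_eval_def by (intro sum.cong refl arg_cong2[where f="(*)"] prod.cong) auto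

lemma norm_add_powr_le:
  fixes x y :: complex and p :: real
  assumes p: "0 \<le> p"
  shows "cmod (x + y) powr p \<le> 2 powr p * (cmod x powr p + cmod y powr p)"
proof -
  have "cmod (x + y) \<le> 2 * max (cmod x) (cmod y)"
    using norm_triangle_ineq[of x y] by linarith
  then have "cmod (x + y) powr p \<le> (2 * max (cmod x) (cmod y)) powr p"
    using p by (intro powr_mono2) auto
  also have "\<dots> = 2 powr p * max (cmod x) (cmod y) powr p" by (simp add: powr_mult)
  also have "max (cmod x) (cmod y) powr p \<le> cmod x powr p + cmod y powr p"
    by (cases "cmod x \<le> cmod y") (auto simp: max_def)
  finally show ?thesis by (simp add: mult_left_mono)
qed

lemma Lp_norm_nonneg: "0 \<le> Lp_norm M p f"
  by (simp add: Lp_norm_def)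

lemma integral_norm_powr_nonneg: "0 \<le> (LINT \<omega>|M. cmod (f \<omega>) powr p)"
  by (intro integral_nonneg_AE) auto

lemma Lp_norm_powr:
  assumes "0 < p"
  shows "Lp_norm M p f powr p = (LINT \<omega>|M. cmod (f \<omega>) powr p)"
  using assms integral_norm_powr_nonneg[of M f p] by (simp add: Lp_norm_def powr_powr)

lemma Lp_norm_tendsto_0_iff:
  assumes p: "0 < p"
  shows "(\<lambda>n. Lp_norm M p (h n)) \<longlonglongrightarrow> 0 \<longleftrightarrow> (\<lambda>n. LINT \<omega>|M. cmod (h n \<omega>) powr p) \<longlonglongrightarrow> 0"
proof
  assume "(\<lambda>n. Lp_norm M p (h n)) \<longlonglongrightarrow> 0"
  then have "(\<lambda>n. Lp_norm M p (h n) powr p) \<longlonglongrightarrow> 0"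
    using p by (intro tendsto_zero_powrI[where b=p]) (auto simp: Lp_norm_nonneg)
  then show "(\<lambda>n. LINT \<omega>|M. cmod (h n \<omega>) powr p) \<longlonglongrightarrow> 0"
    using p by (simp add: Lp_norm_powr)
next
  assume "(\<lambda>n. LINT \<omega>|M. cmod (h n \<omega>) powr p) \<longlonglongrightarrow> 0"
  then have "(\<lambda>n. (LINT \<omega>|M. cmod (h n \<omega>) powr p) powr (1 / p)) \<longlonglongrightarrow> 0"
    using p by (intro tendsto_zero_powrI[where b="1/p"]) (auto simp: integral_norm_powr_nonneg)
  then show "(\<lambda>n. Lp_norm M p (h n)) \<longlonglongrightarrow> 0" by (simp add: Lp_norm_def)
qed

lemma norm_lincomb_powr_le:
  assumes "0 \<le> p"
  shows "cmod (a * x + b * y) powr p \<le> 2 powr p * (cmod a powr p * cmod x powr p + cmod b powr p * cmod y powr p)"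
  using norm_add_powr_le[OF assms, of "a * x" "b * y"] assms by (simp add: norm_mult powr_mult)

lemma in_Lp_lincomb:
  assumes f: "in_Lp M p f" and g: "in_Lp M p g" and p: "0 < p"
  shows "in_Lp M p (\<lambda>\<omega>. a * f \<omega> + b * g \<omega>)"
proof -
  have [measurable]: "f \<in> borel_measurable M" "g \<in> borel_measurable M" using f g by (auto simp: in_Lp_def)
  have "integrable M (\<lambda>\<omega>. 2 powr p * (cmod a powr p * cmod (f \<omega>) powr p + cmod b powr p * cmod (g \<omega>) powr p))"
    using f g by (intro integrable_mult_right Bochner_Integration.integrable_add) (auto simp: in_Lp_def)
  then have "integrable M (\<lambda>\<omega>. cmod (a * f \<omega> + b * g \<omega>) powr p)"
    by (rule Bochner_Integration.integrable_bound)
      (use p in \<open>auto intro!: AE_I2 order_trans[OF norm_lincomb_powr_le] simp: abs_of_nonneg\<close>)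
  then show ?thesis by (simp add: in_Lp_def)
qed

lemma integral_lincomb_powr_le:
  assumes f: "in_Lp M p f" and g: "in_Lp M p g" and p: "0 < p"
  shows "(LINT \<omega>|M. cmod (a * f \<omega> + b * g \<omega>) powr p)
      \<le> 2 powr p * (cmod a powr p * (LINT \<omega>|M. cmod (f \<omega>) powr p) + cmod b powr p * (LINT \<omega>|M. cmod (g \<omega>) powr p))"
proof -
  have "(LINT \<omega>|M. cmod (a * f \<omega> + b * g \<omega>) powr p)
      \<le> (LINT \<omega>|M. 2 powr p * (cmod a powr p * cmod (f \<omega>) powr p + cmod b powr p * cmod (g \<omega>) powr p))"
    using in_Lp_lincomb[OF f g p] f g p
    by (intro integral_mono norm_lincomb_powr_le) (auto simp: in_Lp_def)
  also have "\<dots> = 2 powr p * (cmod a powr p * (LINT \<omega>|M. cmod (f \<omega>) powr p) + cmod b powr p * (LINT \<omega>|M. cmod (g \<omega>) powr p))"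
    using f g by (simp add: in_Lp_def)
  finally show ?thesis .
qed

lemma Lp_norm_le_of_nn_integral_le:
  assumes u: "in_Lp M p u" and v: "in_Lp M p v" and K: "1 \<le> K" and p: "1 \<le> p"
    and le: "(\<integral>\<^sup>+\<omega>. ennreal (cmod (u \<omega>) powr p) \<partial>M) \<le> ennreal K * (\<integral>\<^sup>+\<omega>. ennreal (cmod (v \<omega>) powr p) \<partial>M)"
  shows "Lp_norm M p u \<le> K * Lp_norm M p v"
proof -
  have Iu: "(\<integral>\<^sup>+\<omega>. ennreal (cmod (u \<omega>) powr p) \<partial>M) = ennreal (LINT \<omega>|M. cmod (u \<omega>) powr p)"
    using u by (intro nn_integral_eq_integral) (auto simp: in_Lp_def)
  have Iv: "(\<integral>\<^sup>+\<omega>. ennreal (cmod (v \<omega>) powr p) \<partial>M) = ennreal (LINT \<omega>|M. cmod (v \<omega>) powr p)"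
    using v by (intro nn_integral_eq_integral) (auto simp: in_Lp_def)
  have "(LINT \<omega>|M. cmod (u \<omega>) powr p) \<le> K * (LINT \<omega>|M. cmod (v \<omega>) powr p)"
    using le K unfolding Iu Iv by (simp add: ennreal_mult[symmetric] integral_norm_powr_nonneg ennreal_le_iff)
  then have "Lp_norm M p u \<le> (K * (LINT \<omega>|M. cmod (v \<omega>) powr p)) powr (1 / p)"
    unfolding Lp_norm_def using p by (intro powr_mono2) (auto simp: integral_norm_powr_nonneg)
  also have "\<dots> = K powr (1 / p) * Lp_norm M p v"
    using K by (simp add: Lp_norm_def powr_mult integral_norm_powr_nonneg)
  also have "\<dots> \<le> K * Lp_norm M p v"
  proof (rule mult_right_mono)
    have "K powr (1 / p) \<le> K powr 1" using K p by (intro powr_mono) auto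
    then show "K powr (1 / p) \<le> K" using K by simp
  qed (simp add: Lp_norm_nonneg)
  finally show ?thesis .
qed

lemma poly_eval_superset:
  assumes "finite S" "{\<alpha>. c \<alpha> \<noteq> 0} \<subseteq> S"
  shows "poly_eval c d x = (\<Sum>\<alpha>\<in>S. c \<alpha> * (\<Prod>k<d. complex_of_real (x k) ^ \<alpha> k))"
  unfolding poly_eval_def by (rule sum.mono_neutral_left) (use assms in auto)

lemma is_poly_coeffs_lincomb:
  "is_poly_coeffs c1 \<Longrightarrow> is_poly_coeffs c2 \<Longrightarrow> is_poly_coeffs (\<lambda>\<alpha>. a * c1 \<alpha> + b * c2 \<alpha>)"
  unfolding is_poly_coeffs_def by (rule finite_subset[of _ "{\<alpha>. c1 \<alpha> \<noteq> 0} \<union> {\<alpha>. c2 \<alpha> \<noteq> 0}"]) auto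

lemma poly_fun_lincomb:
  assumes c1: "is_poly_coeffs c1" and c2: "is_poly_coeffs c2"
  shows "poly_fun W (\<lambda>\<alpha>. a * c1 \<alpha> + b * c2 \<alpha>) ys \<omega> = a * poly_fun W c1 ys \<omega> + b * poly_fun W c2 ys \<omega>"
proof -
  define S where "S = {\<alpha>. c1 \<alpha> \<noteq> 0} \<union> {\<alpha>. c2 \<alpha> \<noteq> 0}"
  have S: "finite S" using c1 c2 by (simp add: S_def is_poly_coeffs_def)
  have sub: "{\<alpha>. a * c1 \<alpha> + b * c2 \<alpha> \<noteq> 0} \<subseteq> S" by (auto simp: S_def)
  show ?thesis
    unfolding poly_fun_def
    by (simp add: poly_eval_superset[OF S sub] poly_eval_superset[OF S, of c1] poly_eval_superset[OF S, of c2]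
        S_def sum.distrib sum_distrib_left algebra_simps subset_iff)
qed

lemma AE_eq_0_of_integral_powr_le:
  assumes D: "in_Lp M p D" and p: "0 < p"
    and bound: "\<And>n. (LINT \<omega>|M. cmod (D \<omega>) powr p) \<le> b n" and b: "b \<longlonglongrightarrow> 0"
  shows "AE \<omega> in M. D \<omega> = 0"
proof -
  have "(LINT \<omega>|M. cmod (D \<omega>) powr p) \<le> 0"
    by (rule LIMSEQ_le_const[OF b]) (use bound in auto)
  then have "AE \<omega> in M. cmod (D \<omega>) powr p = 0"
    using D integral_norm_powr_nonneg[of M D p]
    by (subst integral_nonneg_eq_0_iff_AE[symmetric]) (auto simp: in_Lp_def)
  then show ?thesis by (auto elim!: AE_mp)
qed

lemma in_Lp_cong_AE:
  "in_Lp M p f \<Longrightarrow> AE x in M. f x = g x \<Longrightarrow> g \<in> borel_measurable M \<Longrightarrow> in_Lp M p g"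
  unfolding in_Lp_def by (auto intro: integrable_cong_AE_imp elim!: AE_mp)

lemma Lp_norm_cong_AE:
  assumes "AE x in M. f x = g x" "f \<in> borel_measurable M" "g \<in> borel_measurable M"
  shows "Lp_norm M p f = Lp_norm M p g"
  unfolding Lp_norm_def using assms by (subst integral_cong_AE[where g="\<lambda>x. cmod (g x) powr p"]) auto

lemma AE_comp_eq_transfer:
  fixes X X' :: "'a \<Rightarrow> 'b" and F1 F2 :: "'b \<Rightarrow> complex"
  assumes [measurable]: "X \<in> measurable M N" "X' \<in> measurable M N"
    "F1 \<in> borel_measurable N" "F2 \<in> borel_measurable N"
    and dom: "\<forall>G \<in> borel_measurable N. (\<integral>\<^sup>+x. G (X' x) \<partial>M) \<le> ennreal K * (\<integral>\<^sup>+x. G (X x) \<partial>M)"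
    and AE_eq: "AE x in M. F1 (X x) = F2 (X x)"
  shows "AE x in M. F1 (X' x) = F2 (X' x)"
proof -
  define G where "G z = (if F1 z = F2 z then 0 else 1 :: ennreal)" for z
  have measurable_G[measurable]: "G \<in> borel_measurable N" unfolding G_def[abs_def] by measurable
  have "(\<integral>\<^sup>+x. G (X x) \<partial>M) = 0"
    using AE_eq by (subst nn_integral_0_iff_AE) (auto elim!: AE_mp simp: G_def)
  moreover have "(\<integral>\<^sup>+x. G (X' x) \<partial>M) \<le> ennreal K * (\<integral>\<^sup>+x. G (X x) \<partial>M)"
    using dom measurable_G by blast
  ultimately have "(\<integral>\<^sup>+x. G (X' x) \<partial>M) = 0" by simp
  then show ?thesis
    by (subst (asm) nn_integral_0_iff_AE) (auto elim!: AE_mp simp: G_def split: if_splits)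
qed

lemma Lp_comp_transfer:
  fixes X X' :: "'a \<Rightarrow> 'b" and F :: "'b \<Rightarrow> complex"
  assumes [measurable]: "X \<in> measurable M N" "X' \<in> measurable M N" "F \<in> borel_measurable N"
    and dom: "\<forall>G \<in> borel_measurable N. (\<integral>\<^sup>+x. G (X' x) \<partial>M) \<le> ennreal K * (\<integral>\<^sup>+x. G (X x) \<partial>M)"
    and K: "1 \<le> K" and p: "1 \<le> p" and Lp: "in_Lp M p (\<lambda>x. F (X x))"
  shows "in_Lp M p (\<lambda>x. F (X' x))" and "Lp_norm M p (\<lambda>x. F (X' x)) \<le> K * Lp_norm M p (\<lambda>x. F (X x))"
proof -
  have le: "(\<integral>\<^sup>+x. ennreal (cmod (F (X' x)) powr p) \<partial>M) \<le> ennreal K * (\<integral>\<^sup>+x. ennreal (cmod (F (X x)) powr p) \<partial>M)"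
    by (rule bspec[OF dom]) measurable
  have "(\<integral>\<^sup>+x. ennreal (cmod (F (X x)) powr p) \<partial>M) < \<infinity>"
    using Lp by (subst nn_integral_eq_integral) (auto simp: in_Lp_def)
  then have "(\<integral>\<^sup>+x. ennreal (norm (cmod (F (X' x)) powr p)) \<partial>M) < \<infinity>"
    using le by (simp add: ennreal_mult_less_top) (meson ennreal_less_top ennreal_mult_less_top le_less_trans)
  then have "integrable M (\<lambda>x. cmod (F (X' x)) powr p)" by (intro integrableI_bounded) auto
  then show Lp': "in_Lp M p (\<lambda>x. F (X' x))" by (simp add: in_Lp_def)
  show "Lp_norm M p (\<lambda>x. F (X' x)) \<le> K * Lp_norm M p (\<lambda>x. F (X x))"
    by (rule Lp_norm_le_of_nn_integral_le[OF Lp' Lp K p le])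
qed

section \<open>The isonormal process\<close>

lemma one_plus_power_le: "0 \<le> (a::real) \<Longrightarrow> (1 + a) ^ n \<le> 2 ^ n * (1 + a ^ n)"
proof -
  assume a: "0 \<le> a"
  have "(1 + a) ^ n \<le> (2 * max 1 a) ^ n" using a by (intro power_mono) auto
  also have "\<dots> = 2 ^ n * max 1 a ^ n" by (simp add: power_mult_distrib)
  also have "max 1 a ^ n \<le> 1 + a ^ n" using a by (cases "a \<le> 1") (auto simp: max_def)
  finally show ?thesis by (simp add: mult_left_mono)
qed

lemma nn_integral_std_normal_le_scaled:
  fixes h :: "real \<Rightarrow> ennreal" and \<sigma> :: real
  assumes h[measurable]: "h \<in> borel_measurable borel" and \<sigma>: "1 \<le> \<sigma>"
  shows "(\<integral>\<^sup>+r. h r \<partial>std_normal_distribution) \<le> ennreal \<sigma> * (\<integral>\<^sup>+r. h (\<sigma> * r) \<partial>std_normal_distribution)"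
proof -
  have phi: "std_normal_density (\<sigma> * x) \<le> std_normal_density x" for x
  proof -
    have "x\<^sup>2 \<le> (\<sigma> * x)\<^sup>2"
    proof -
      have "1 \<le> \<sigma>\<^sup>2" using \<sigma> by (simp add: one_le_power)
      then have "1 * x\<^sup>2 \<le> \<sigma>\<^sup>2 * x\<^sup>2" by (intro mult_right_mono) auto
      then show ?thesis by (simp add: power_mult_distrib)
    qed
    then show ?thesis unfolding std_normal_density_def by (simp add: divide_right_mono)
  qed
  have "(\<integral>\<^sup>+r. h r \<partial>std_normal_distribution) = (\<integral>\<^sup>+x. ennreal (std_normal_density x) * h x \<partial>lborel)"
    by (subst nn_integral_density) auto
  also have "\<dots> = ennreal \<bar>\<sigma>\<bar> * (\<integral>\<^sup>+x. ennreal (std_normal_density (0 + \<sigma> * x)) * h (0 + \<sigma> * x) \<partial>lborel)"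
    using \<sigma> by (intro nn_integral_real_affine) auto
  also have "\<dots> \<le> ennreal \<sigma> * (\<integral>\<^sup>+x. ennreal (std_normal_density x) * h (\<sigma> * x) \<partial>lborel)"
    using \<sigma> by (auto intro!: mult_left_mono nn_integral_mono mult_right_mono ennreal_leI phi)
  also have "(\<integral>\<^sup>+x. ennreal (std_normal_density x) * h (\<sigma> * x) \<partial>lborel) = (\<integral>\<^sup>+r. h (\<sigma> * r) \<partial>std_normal_distribution)"
    by (subst nn_integral_density) auto
  finally show ?thesis .
qed

definition transport :: "'a measure \<Rightarrow> 'b measure \<Rightarrow> ('a \<Rightarrow> 'b) \<Rightarrow> ('a \<Rightarrow> 'b) \<Rightarrow> ('a \<Rightarrow> complex) \<Rightarrow> 'a \<Rightarrow> complex"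
  where "transport M N X X' f x = (SOME F. F \<in> borel_measurable N \<and> (AE y in M. f y = F (X y))) (X' x)"

lemma transport_measurable:
  assumes "X' \<in> measurable M N" "F \<in> borel_measurable N" "AE x in M. f x = F (X x)"
  shows "transport M N X X' f \<in> borel_measurable M"
proof -
  have "\<exists>F. F \<in> borel_measurable N \<and> (AE y in M. f y = F (X y))" using assms(2,3) by blast
  from someI_ex[OF this] show ?thesis
    using assms(1) unfolding transport_def[abs_def] by (auto intro: measurable_compose)
qed

lemma AE_transport_eq:
  fixes X X' :: "'a \<Rightarrow> 'b" and F :: "'b \<Rightarrow> complex"
  assumes [measurable]: "X \<in> measurable M N" "X' \<in> measurable M N"
    and dom: "\<forall>G \<in> borel_measurable N. (\<integral>\<^sup>+x. G (X' x) \<partial>M) \<le> ennreal K * (\<integral>\<^sup>+x. G (X x) \<partial>M)"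
    and [measurable]: "F \<in> borel_measurable N" and F: "AE x in M. f x = F (X x)"
  shows "AE x in M. transport M N X X' f x = F (X' x)"
proof -
  define F0 where "F0 = (SOME F. F \<in> borel_measurable N \<and> (AE y in M. f y = F (X y)))"
  have "F0 \<in> borel_measurable N \<and> (AE y in M. f y = F0 (X y))"
    unfolding F0_def by (rule someI[of _ F]) (use F in simp)
  then have [measurable]: "F0 \<in> borel_measurable N" and "AE y in M. F0 (X y) = F (X y)"
    using F by (auto elim!: AE_mp)
  from AE_comp_eq_transfer[OF _ _ _ _ dom this(2)] show ?thesis
    by (simp add: transport_def F0_def[symmetric])
qed

locale isonormal_process =
  fixes M :: "'a measure" and W :: "(real \<Rightarrow> real) \<Rightarrow> 'a \<Rightarrow> real"
  assumes isonormal: "isonormal M W"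
begin

sublocale prob_space M
  using isonormal by (simp add: isonormal_def)

lemma W_measurable[measurable_dest]: "f \<in> L2 \<Longrightarrow> W f \<in> borel_measurable M"
  using isonormal by (simp add: isonormal_def)

lemma W_lincomb:
  "f \<in> L2 \<Longrightarrow> g \<in> L2 \<Longrightarrow> AE \<omega> in M. W (\<lambda>x. a * f x + b * g x) \<omega> = a * W f \<omega> + b * W g \<omega>"
  using isonormal by (simp add: isonormal_def)

lemma char_W: "f \<in> L2 \<Longrightarrow> (\<integral>\<omega>. iexp (W f \<omega>) \<partial>M) = exp (- of_real (ip f f / 2))"
  using isonormal by (simp add: isonormal_def)

lemma W_sum:
  fixes n :: nat
  assumes "\<And>j. j < n \<Longrightarrow> f j \<in> L2"
  shows "AE \<omega> in M. W (\<lambda>x. \<Sum>j<n. s j * f j x) \<omega> = (\<Sum>j<n. s j * W (f j) \<omega>)"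
  using assms
proof (induction n)
  case 0
  have "(\<lambda>x. 0) \<in> L2" by (simp add: L2_def)
  from W_lincomb[OF this this, of 0 0] show ?case by simp
next
  case (Suc n)
  have "AE \<omega> in M. W (\<lambda>x. 1 * (\<Sum>j<n. s j * f j x) + s n * f n x) \<omega>
      = 1 * W (\<lambda>x. \<Sum>j<n. s j * f j x) \<omega> + s n * W (f n) \<omega>"
    using Suc.prems by (intro W_lincomb L2_sum) auto
  with Suc show ?case by (auto elim: AE_mp)
qed

lemma char_W_sum:
  fixes n :: nat and s :: "nat \<Rightarrow> real"
  assumes f: "\<And>j. j < n \<Longrightarrow> f j \<in> L2"
  defines "F \<equiv> \<lambda>x. \<Sum>j<n. s j * f j x"
  shows "(\<integral>\<omega>. iexp (\<Sum>j<n. s j * W (f j) \<omega>) \<partial>M) = exp (- of_real (ip F F / 2))"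
proof -
  have [measurable]: "W F \<in> borel_measurable M" "(\<lambda>\<omega>. \<Sum>j<n. s j * W (f j) \<omega>) \<in> borel_measurable M"
    using f by (auto simp: F_def intro!: W_measurable L2_sum borel_measurable_sum borel_measurable_times)
  have "AE \<omega> in M. W F \<omega> = (\<Sum>j<n. s j * W (f j) \<omega>)"
    unfolding F_def by (rule W_sum) (rule f)
  then have "(\<integral>\<omega>. iexp (\<Sum>j<n. s j * W (f j) \<omega>) \<partial>M) = (\<integral>\<omega>. iexp (W F \<omega>) \<partial>M)"
    by (intro integral_cong_AE) (measurable, measurable, auto elim!: AE_mp)
  also have "\<dots> = exp (- of_real (ip F F / 2))"
    using f by (simp add: F_def char_W L2_sum)
  finally show ?thesis .
qed

lemma distr_W:
  assumes f: "f \<in> L2"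
  shows "distr M borel (W f) = distr std_normal_distribution borel (\<lambda>r. sqrt (ip f f) * r)"
proof (rule Levy_uniqueness)
  interpret S: real_distribution std_normal_distribution by (rule real_dist_normal_dist)
  show "real_distribution (distr M borel (W f))"
    using f by (simp add: real_distribution_def real_distribution_axioms_def prob_space_distr)
  show "real_distribution (distr std_normal_distribution borel (\<lambda>r. sqrt (ip f f) * r))"
    by (simp add: real_distribution_def real_distribution_axioms_def S.prob_space_distr)
  show "char (distr M borel (W f)) = char (distr std_normal_distribution borel (\<lambda>r. sqrt (ip f f) * r))"
  proof
    fix t
    have tf: "(\<lambda>x. t * f x) \<in> L2" using f by (rule L2_scale)
    have "char (distr M borel (W f)) t = (\<integral>\<omega>. iexp (t * W f \<omega>) \<partial>M)"
      using f by (simp add: char_def integral_distr)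
    also have "\<dots> = (\<integral>\<omega>. iexp (W (\<lambda>x. t * f x) \<omega>) \<partial>M)"
      using W_lincomb[OF f f, of t 0] f tf by (intro integral_cong_AE) (auto elim!: AE_mp)
    also have "\<dots> = exp (of_real (- (sqrt (ip f f) * t)\<^sup>2 / 2))"
      using tf ip_self_nonneg[of f] by (simp add: char_W ip_scale_left ip_scale_right power2_eq_square mult_ac)
    also have "\<dots> = char std_normal_distribution (sqrt (ip f f) * t)"
      by (subst exp_of_real) (simp add: char_std_normal_distribution)
    also have "\<dots> = char (distr std_normal_distribution borel (\<lambda>r. sqrt (ip f f) * r)) t"
      by (simp add: char_def integral_distr mult_ac)
    finally show "char (distr M borel (W f)) t = char (distr std_normal_distribution borel (\<lambda>r. sqrt (ip f f) * r)) t" .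
  qed
qed


lemma char_W_orthogonal_unit:
  fixes d :: nat and g :: "nat \<Rightarrow> real \<Rightarrow> real" and s :: "nat \<Rightarrow> real"
  assumes g: "\<And>k. k < d \<Longrightarrow> g k \<in> L2" and u: "u \<in> L2" "ip u u = 1"
    and gu: "\<And>k. k < d \<Longrightarrow> ip (g k) u = 0"
  shows "(\<integral>\<omega>. iexp ((\<Sum>j<d. s j * W (g j) \<omega>) + s d * W u \<omega>) \<partial>M)
       = (\<integral>z. iexp ((\<Sum>j<d. s j * W (g j) (fst z)) + s d * snd z) \<partial>(M \<Otimes>\<^sub>M std_normal_distribution))"
proof -
  interpret S: prob_space std_normal_distribution
    using real_dist_normal_dist by (simp add: real_distribution_def)
  interpret P: pair_prob_space M std_normal_distribution ..
  define G where "G x = (\<Sum>j<d. s j * g j x)" for x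
  define h where "h j = (if j < d then g j else u)" for j
  have h: "h j \<in> L2" if "j < Suc d" for j using that g u by (auto simp: h_def)
  have G: "G \<in> L2" "ip G u = 0"
    using g u gu by (auto simp: G_def[abs_def] L2_sum ip_sum_left)
  have [measurable]: "(\<lambda>\<omega>. \<Sum>j<d. s j * W (g j) \<omega>) \<in> borel_measurable M"
    using g by (intro borel_measurable_sum borel_measurable_times W_measurable) auto
  have "(\<integral>\<omega>. iexp ((\<Sum>j<d. s j * W (g j) \<omega>) + s d * W u \<omega>) \<partial>M)
      = (\<integral>\<omega>. iexp (\<Sum>j<Suc d. s j * W (h j) \<omega>) \<partial>M)"
    by (auto simp: h_def intro!: Bochner_Integration.integral_cong arg_cong[where f=iexp] sum.cong)
  also have "\<dots> = exp (- of_real (ip (\<lambda>x. 1 * G x + s d * u x) (\<lambda>x. 1 * G x + s d * u x) / 2))"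
    by (subst char_W_sum[OF h]) (auto simp: h_def G_def intro!: arg_cong2[where f=ip] sum.cong)
  also have "\<dots> = exp (- of_real (ip G G / 2)) * exp (- of_real ((s d)\<^sup>2 / 2))"
    using u by (subst ip_lincomb_self_orthogonal[OF G(1) u(1) G(2)])
      (simp add: exp_add[symmetric] add_divide_distrib)
  also have "\<dots> = (\<integral>\<omega>. iexp (\<Sum>j<d. s j * W (g j) \<omega>) \<partial>M) * char std_normal_distribution (s d)"
  proof -
    have "(\<integral>\<omega>. iexp (\<Sum>j<d. s j * W (g j) \<omega>) \<partial>M) = exp (- of_real (ip G G / 2))"
      unfolding G_def by (rule char_W_sum) (rule g)
    moreover have "exp (- of_real ((s d)\<^sup>2 / 2)) = char std_normal_distribution (s d)"
      unfolding char_std_normal_distribution exp_of_real[symmetric] by simp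
    ultimately show ?thesis by simp
  qed
  also have "\<dots> = (\<integral>\<omega>. \<integral>r. iexp ((\<Sum>j<d. s j * W (g j) \<omega>) + s d * r) \<partial>std_normal_distribution \<partial>M)"
    by (simp add: char_def distrib_left exp_add)
  also have "\<dots> = (\<integral>z. iexp ((\<Sum>j<d. s j * W (g j) (fst z)) + s d * snd z) \<partial>(M \<Otimes>\<^sub>M std_normal_distribution))"
  proof -
    have "integrable (M \<Otimes>\<^sub>M std_normal_distribution) (\<lambda>z. iexp ((\<Sum>j<d. s j * W (g j) (fst z)) + s d * snd z))"
      by (rule P.integrable_const_bound[of _ 1]) (auto simp del: of_real_sum)
    from P.integral_fst'[OF this] show ?thesis by simp
  qed
  finally show ?thesis .
qed


lemma distr_W_orthogonal_unit:
  fixes d :: nat and g :: "nat \<Rightarrow> real \<Rightarrow> real"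
  assumes g: "\<And>k. k < d \<Longrightarrow> g k \<in> L2" and u: "u \<in> L2" "ip u u = 1"
    and gu: "\<And>k. k < d \<Longrightarrow> ip (g k) u = 0"
  shows "distr M (PiM {..<d} (\<lambda>_. borel) \<Otimes>\<^sub>M borel) (\<lambda>\<omega>. (\<lambda>k\<in>{..<d}. W (g k) \<omega>, W u \<omega>))
    = distr (M \<Otimes>\<^sub>M std_normal_distribution) (PiM {..<d} (\<lambda>_. borel) \<Otimes>\<^sub>M borel)
        (\<lambda>z. (\<lambda>k\<in>{..<d}. W (g k) (fst z), snd z))"
proof -
  interpret S: prob_space std_normal_distribution
    using real_dist_normal_dist by (simp add: real_distribution_def)
  interpret P: pair_prob_space M std_normal_distribution ..
  let ?N = "M \<Otimes>\<^sub>M std_normal_distribution" and ?I = "{..<Suc d}"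
  define V where "V j = (if j < d then W (g j) else if j = d then W u else (\<lambda>_. 0))" for j
  define V' where "V' j = (if j < d then (\<lambda>z. W (g j) (fst z)) else if j = d then snd else (\<lambda>_. 0))" for j
  have [measurable]: "(\<lambda>z. W (g k) (fst z)) \<in> borel_measurable ?N" if "k < d" for k
    using measurable_compose[OF measurable_fst[of M std_normal_distribution] W_measurable[OF g[OF that]]]
    by (simp add: comp_def)
  have [measurable]: "V j \<in> borel_measurable M" "V' j \<in> borel_measurable ?N" for j
    using g u by (auto simp: V_def V'_def)
  have law: "distr M (PiM ?I (\<lambda>_. borel)) (\<lambda>\<omega>. \<lambda>j\<in>?I. V j \<omega>) = distr ?N (PiM ?I (\<lambda>_. borel)) (\<lambda>z. \<lambda>j\<in>?I. V' j z)"
  proof (rule Levy_uniqueness_multivariate)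
    fix s :: "nat \<Rightarrow> real"
    have "(\<Sum>j<Suc d. s j * V j \<omega>) = (\<Sum>j<d. s j * W (g j) \<omega>) + s d * W u \<omega>" for \<omega>
      by (auto simp: V_def intro!: sum.cong)
    moreover have "(\<Sum>j<Suc d. s j * V' j z) = (\<Sum>j<d. s j * W (g j) (fst z)) + s d * snd z" for z
      by (auto simp: V'_def intro!: sum.cong)
    ultimately show "(\<integral>x. iexp (\<Sum>j<Suc d. s j * V j x) \<partial>M) = (\<integral>x. iexp (\<Sum>j<Suc d. s j * V' j x) \<partial>?N)"
      using char_W_orthogonal_unit[OF g u gu] by simp
  qed (simp_all add: prob_space_axioms P.prob_space_axioms)
  define pair_last where "pair_last z = (restrict z {..<d}, z d)" for z :: "nat \<Rightarrow> real"
  have [measurable]: "pair_last \<in> measurable (PiM ?I (\<lambda>_. borel)) (PiM {..<d} (\<lambda>_. borel) \<Otimes>\<^sub>M borel)"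
    unfolding pair_last_def[abs_def]
    by (intro measurable_Pair measurable_restrict_subset measurable_component_singleton) auto
  have [measurable]: "(\<lambda>\<omega>. \<lambda>j\<in>?I. V j \<omega>) \<in> measurable M (PiM ?I (\<lambda>_. borel))"
    "(\<lambda>z. \<lambda>j\<in>?I. V' j z) \<in> measurable ?N (PiM ?I (\<lambda>_. borel))"
    by (rule measurable_restrict, simp)+
  have "(\<lambda>\<omega>. (\<lambda>k\<in>{..<d}. W (g k) \<omega>, W u \<omega>)) = pair_last \<circ> (\<lambda>\<omega>. \<lambda>j\<in>?I. V j \<omega>)"
    and "(\<lambda>z. (\<lambda>k\<in>{..<d}. W (g k) (fst z), snd z)) = pair_last \<circ> (\<lambda>z. \<lambda>j\<in>?I. V' j z)"
    by (auto simp: fun_eq_iff pair_last_def V_def V'_def)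
  then show ?thesis
    using distr_distr[of pair_last "PiM ?I (\<lambda>_. borel)" "PiM {..<d} (\<lambda>_. borel) \<Otimes>\<^sub>M borel" "\<lambda>\<omega>. \<lambda>j\<in>?I. V j \<omega>" M]
      distr_distr[of pair_last "PiM ?I (\<lambda>_. borel)" "PiM {..<d} (\<lambda>_. borel) \<Otimes>\<^sub>M borel" "\<lambda>z. \<lambda>j\<in>?I. V' j z" ?N]
    by (simp add: law)
qed

lemma nn_integral_W_orthogonal_unit:
  fixes d :: nat and g :: "nat \<Rightarrow> real \<Rightarrow> real" and F :: "(nat \<Rightarrow> real) \<times> real \<Rightarrow> ennreal"
  assumes g: "\<And>k. k < d \<Longrightarrow> g k \<in> L2" and u: "u \<in> L2" "ip u u = 1"
    and gu: "\<And>k. k < d \<Longrightarrow> ip (g k) u = 0"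
    and F[measurable]: "F \<in> borel_measurable (PiM {..<d} (\<lambda>_. borel) \<Otimes>\<^sub>M borel)"
  shows "(\<integral>\<^sup>+\<omega>. F (\<lambda>k\<in>{..<d}. W (g k) \<omega>, W u \<omega>) \<partial>M)
       = (\<integral>\<^sup>+\<omega>. \<integral>\<^sup>+r. F (\<lambda>k\<in>{..<d}. W (g k) \<omega>, r) \<partial>std_normal_distribution \<partial>M)"
proof -
  interpret S: prob_space std_normal_distribution
    using real_dist_normal_dist by (simp add: real_distribution_def)
  let ?N = "M \<Otimes>\<^sub>M std_normal_distribution" and ?PM = "PiM {..<d} (\<lambda>_. borel) \<Otimes>\<^sub>M borel"
  have [measurable]: "(\<lambda>z. W (g k) (fst z)) \<in> borel_measurable ?N" if "k < d" for k
    using measurable_compose[OF measurable_fst[of M std_normal_distribution] W_measurable[OF g[OF that]]]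
    by (simp add: comp_def)
  have [measurable]: "(\<lambda>\<omega>. (\<lambda>k\<in>{..<d}. W (g k) \<omega>, W u \<omega>)) \<in> measurable M ?PM"
    "(\<lambda>z. (\<lambda>k\<in>{..<d}. W (g k) (fst z), snd z)) \<in> measurable ?N ?PM"
    using g u by (intro measurable_Pair measurable_restrict; simp)+
  have "(\<integral>\<^sup>+\<omega>. F (\<lambda>k\<in>{..<d}. W (g k) \<omega>, W u \<omega>) \<partial>M)
      = (\<integral>\<^sup>+z. F z \<partial>distr M ?PM (\<lambda>\<omega>. (\<lambda>k\<in>{..<d}. W (g k) \<omega>, W u \<omega>)))"
    by (simp add: nn_integral_distr)
  also have "\<dots> = (\<integral>\<^sup>+z. F (\<lambda>k\<in>{..<d}. W (g k) (fst z), snd z) \<partial>?N)"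
    by (simp add: distr_W_orthogonal_unit[OF g u gu] nn_integral_distr)
  also have "\<dots> = (\<integral>\<^sup>+\<omega>. \<integral>\<^sup>+r. F (\<lambda>k\<in>{..<d}. W (g k) \<omega>, r) \<partial>std_normal_distribution \<partial>M)"
    by (rule S.nn_integral_fst[symmetric, where f="\<lambda>z. F (\<lambda>k\<in>{..<d}. W (g k) (fst z), snd z)", simplified])
      measurable
  finally show ?thesis .
qed


lemma integrable_W_power:
  assumes f: "f \<in> L2"
  shows "integrable M (\<lambda>\<omega>. (1 + \<bar>W f \<omega>\<bar>) ^ n)"
proof -
  interpret S: prob_space std_normal_distribution
    using real_dist_normal_dist by (simp add: real_distribution_def)
  define c where "c = sqrt (ip f f)"
  have [measurable]: "W f \<in> borel_measurable M" using f by (rule W_measurable)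
  have "integrable std_normal_distribution (\<lambda>r. \<bar>r\<bar> ^ n)"
    by (subst integrable_density) (auto simp: normal_density_nonneg integrable_std_normal_moment_abs)
  then have "integrable std_normal_distribution (\<lambda>r. 2 ^ n * (1 + \<bar>c\<bar> ^ n * \<bar>r\<bar> ^ n))"
    by (intro integrable_mult_right Bochner_Integration.integrable_add) auto
  then have "integrable std_normal_distribution (\<lambda>r. (1 + \<bar>c * r\<bar>) ^ n)"
    by (rule Bochner_Integration.integrable_bound)
      (auto intro!: AE_I2 order_trans[OF one_plus_power_le] simp: abs_mult power_mult_distrib)
  then have "integrable (distr M borel (W f)) (\<lambda>x. (1 + \<bar>x\<bar>) ^ n)"
    by (simp add: distr_W[OF f] integrable_distr_eq c_def)
  then show ?thesis
    by (simp add: integrable_distr_eq)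
qed


lemma nn_integral_W_shift_le:
  fixes d :: nat and g :: "nat \<Rightarrow> real \<Rightarrow> real" and c :: "nat \<Rightarrow> real"
    and G :: "(nat \<Rightarrow> real) \<Rightarrow> ennreal"
  assumes g: "\<And>k. k < d \<Longrightarrow> g k \<in> L2 \<and> ip (g k) e = 0 \<and> ip (g k) e' = 0"
    and e: "e \<in> L2" "ip e e = 1" and e': "e' \<in> L2" "ip e' e' = 1" and \<sigma>: "1 \<le> \<sigma>"
    and G[measurable]: "G \<in> borel_measurable (PiM {..<d} (\<lambda>_. borel))"
  shows "(\<integral>\<^sup>+\<omega>. G (\<lambda>k\<in>{..<d}. W (g k) \<omega> + c k * W e \<omega>) \<partial>M)
       \<le> ennreal \<sigma> * (\<integral>\<^sup>+\<omega>. G (\<lambda>k\<in>{..<d}. W (g k) \<omega> + \<sigma> * c k * W e' \<omega>) \<partial>M)"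
proof -
  interpret S: prob_space std_normal_distribution
    using real_dist_normal_dist by (simp add: real_distribution_def)
  define F where "F t z = G (\<lambda>k\<in>{..<d}. fst z k + t * c k * snd z)" for t z
  have F[measurable]: "F t \<in> borel_measurable (PiM {..<d} (\<lambda>_. borel) \<Otimes>\<^sub>M borel)" for t
  proof -
    have "(\<lambda>z. \<lambda>k\<in>{..<d}. fst z k + t * c k * snd z)
        \<in> measurable (PiM {..<d} (\<lambda>_. borel) \<Otimes>\<^sub>M borel) (PiM {..<d} (\<lambda>_. borel))"
      by (intro measurable_restrict) measurable
    from measurable_compose[OF this G] show ?thesis by (simp add: F_def[abs_def] comp_def)
  qed
  let ?X = "\<lambda>\<omega>. \<lambda>k\<in>{..<d}. W (g k) \<omega>"
  have X: "?X \<in> measurable M (PiM {..<d} (\<lambda>_. borel))"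
    using g by (intro measurable_restrict W_measurable) auto
  have "(\<integral>\<^sup>+\<omega>. G (\<lambda>k\<in>{..<d}. W (g k) \<omega> + c k * W e \<omega>) \<partial>M) = (\<integral>\<^sup>+\<omega>. F 1 (?X \<omega>, W e \<omega>) \<partial>M)"
    by (simp add: F_def cong: restrict_cong)
  also have "\<dots> = (\<integral>\<^sup>+\<omega>. \<integral>\<^sup>+r. F 1 (?X \<omega>, r) \<partial>std_normal_distribution \<partial>M)"
    using g by (intro nn_integral_W_orthogonal_unit e F) auto
  also have "\<dots> \<le> (\<integral>\<^sup>+\<omega>. ennreal \<sigma> * \<integral>\<^sup>+r. F \<sigma> (?X \<omega>, r) \<partial>std_normal_distribution \<partial>M)"
  proof (rule nn_integral_mono)
    fix \<omega>
    have "(\<lambda>r. F 1 (?X \<omega>, r)) \<in> borel_measurable borel" by measurable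
    from nn_integral_std_normal_le_scaled[OF this \<sigma>]
    show "(\<integral>\<^sup>+r. F 1 (?X \<omega>, r) \<partial>std_normal_distribution) \<le> ennreal \<sigma> * \<integral>\<^sup>+r. F \<sigma> (?X \<omega>, r) \<partial>std_normal_distribution"
      by (simp add: F_def mult.assoc mult.left_commute)
  qed
  also have "\<dots> = ennreal \<sigma> * (\<integral>\<^sup>+\<omega>. \<integral>\<^sup>+r. F \<sigma> (?X \<omega>, r) \<partial>std_normal_distribution \<partial>M)"
  proof (rule nn_integral_cmult)
    have "(\<lambda>z. F \<sigma> (?X (fst z), snd z)) \<in> borel_measurable (M \<Otimes>\<^sub>M std_normal_distribution)"
      using measurable_compose[OF measurable_Pair[OF measurable_compose[OF measurable_fst X] measurable_snd] F]
      by (simp add: comp_def)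
    from S.borel_measurable_nn_integral_fst[OF this]
    show "(\<lambda>\<omega>. \<integral>\<^sup>+r. F \<sigma> (?X \<omega>, r) \<partial>std_normal_distribution) \<in> borel_measurable M" by simp
  qed
  also have "(\<integral>\<^sup>+\<omega>. \<integral>\<^sup>+r. F \<sigma> (?X \<omega>, r) \<partial>std_normal_distribution \<partial>M) = (\<integral>\<^sup>+\<omega>. F \<sigma> (?X \<omega>, W e' \<omega>) \<partial>M)"
    using g by (intro nn_integral_W_orthogonal_unit[symmetric] e' F) auto
  also have "\<dots> = (\<integral>\<^sup>+\<omega>. G (\<lambda>k\<in>{..<d}. W (g k) \<omega> + \<sigma> * c k * W e' \<omega>) \<partial>M)"
    by (simp add: F_def cong: restrict_cong)
  finally show ?thesis .
qed


lemma nn_integral_W_perp_le: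
  assumes \<eta>: "\<eta> \<in> L2" "ip \<eta> \<eta> = 1" and xs: "set xs \<subseteq> L2" and indep: "L2_lin_indep (\<eta> # xs)"
  obtains K where "1 \<le> K"
    and "\<And>G. G \<in> borel_measurable (PiM {..<length xs} (\<lambda>_. borel)) \<Longrightarrow>
      (\<integral>\<^sup>+\<omega>. G (\<lambda>k\<in>{..<length xs}. W (perp \<eta> (xs ! k)) \<omega>) \<partial>M)
        \<le> ennreal K * (\<integral>\<^sup>+\<omega>. G (\<lambda>k\<in>{..<length xs}. W (xs ! k) \<omega>) \<partial>M)"
proof (rule perp_decomposition[OF \<eta> xs indep])
  fix g :: "nat \<Rightarrow> real \<Rightarrow> real" and e e' :: "real \<Rightarrow> real" and c :: "nat \<Rightarrow> real" and \<sigma> :: real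
  assume \<sigma>: "1 \<le> \<sigma>" and e: "e \<in> L2" "ip e e = 1" and e': "e' \<in> L2" "ip e' e' = 1"
    and g: "\<And>k. k < length xs \<Longrightarrow> g k \<in> L2 \<and> ip (g k) e = 0 \<and> ip (g k) e' = 0"
    and perp_eq: "\<And>k. k < length xs \<Longrightarrow> perp \<eta> (xs ! k) = (\<lambda>x. g k x + c k * e x)"
    and xs_eq: "\<And>k. k < length xs \<Longrightarrow> xs ! k = (\<lambda>x. g k x + \<sigma> * c k * e' x)"
  have "AE \<omega> in M. W (perp \<eta> (xs ! k)) \<omega> = W (g k) \<omega> + c k * W e \<omega>"
    "AE \<omega> in M. W (xs ! k) \<omega> = W (g k) \<omega> + \<sigma> * c k * W e' \<omega>" if "k < length xs" for k
  proof -
    show "AE \<omega> in M. W (perp \<eta> (xs ! k)) \<omega> = W (g k) \<omega> + c k * W e \<omega>"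
      using W_lincomb[of "g k" e 1 "c k"] g[OF that] e by (simp add: perp_eq[OF that])
    show "AE \<omega> in M. W (xs ! k) \<omega> = W (g k) \<omega> + \<sigma> * c k * W e' \<omega>"
      using W_lincomb[of "g k" e' 1 "\<sigma> * c k"] g[OF that] e' by (simp add: xs_eq[OF that] mult.assoc)
  qed
  then have "AE \<omega> in M. \<forall>k\<in>{..<length xs}. W (perp \<eta> (xs ! k)) \<omega> = W (g k) \<omega> + c k * W e \<omega>"
    "AE \<omega> in M. \<forall>k\<in>{..<length xs}. W (xs ! k) \<omega> = W (g k) \<omega> + \<sigma> * c k * W e' \<omega>"
    by (simp_all add: AE_ball_countable)
  note AE = this
  show thesis
  proof (rule that[OF \<sigma>])
    fix G :: "(nat \<Rightarrow> real) \<Rightarrow> ennreal" assume G: "G \<in> borel_measurable (PiM {..<length xs} (\<lambda>_. borel))"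
    show "(\<integral>\<^sup>+\<omega>. G (\<lambda>k\<in>{..<length xs}. W (perp \<eta> (xs ! k)) \<omega>) \<partial>M)
        \<le> ennreal \<sigma> * (\<integral>\<^sup>+\<omega>. G (\<lambda>k\<in>{..<length xs}. W (xs ! k) \<omega>) \<partial>M)"
    proof -
      have "(\<integral>\<^sup>+\<omega>. G (\<lambda>k\<in>{..<length xs}. W (perp \<eta> (xs ! k)) \<omega>) \<partial>M)
          = (\<integral>\<^sup>+\<omega>. G (\<lambda>k\<in>{..<length xs}. W (g k) \<omega> + c k * W e \<omega>) \<partial>M)"
        using AE(1) by (intro nn_integral_cong_AE) (auto elim!: AE_mp cong: restrict_cong)
      moreover have "(\<integral>\<^sup>+\<omega>. G (\<lambda>k\<in>{..<length xs}. W (xs ! k) \<omega>) \<partial>M)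
          = (\<integral>\<^sup>+\<omega>. G (\<lambda>k\<in>{..<length xs}. W (g k) \<omega> + \<sigma> * c k * W e' \<omega>) \<partial>M)"
        using AE(2) by (intro nn_integral_cong_AE) (auto elim!: AE_mp cong: restrict_cong)
      ultimately show ?thesis
        using nn_integral_W_shift_le[OF g e e' \<sigma> G] by simp
    qed
  qed
qed


lemma W_vector_measurable:
  "set ys \<subseteq> L2 \<Longrightarrow> (\<lambda>\<omega>. \<lambda>k\<in>{..<length ys}. W (ys ! k) \<omega>) \<in> measurable M (PiM {..<length ys} (\<lambda>_. borel))"
  by (intro measurable_restrict W_measurable) auto

lemma poly_fun_eq_poly_eval:
  "poly_fun W c ys \<omega> = poly_eval c (length ys) (\<lambda>k\<in>{..<length ys}. W (ys ! k) \<omega>)"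
  unfolding poly_fun_def by (rule poly_eval_cong) auto

lemma poly_fun_measurable:
  assumes "set ys \<subseteq> L2"
  shows "poly_fun W c ys \<in> borel_measurable M"
  using measurable_compose[OF W_vector_measurable[OF assms] poly_eval_measurable]
  by (simp add: poly_fun_eq_poly_eval[abs_def] comp_def)

lemma poly_fun_in_Lp:
  assumes ys: "set ys \<subseteq> L2" and c: "is_poly_coeffs c" and p: "0 < p"
  shows "in_Lp M p (poly_fun W c ys)"
proof -
  obtain B N where bound: "\<And>x. cmod (poly_eval c (length ys) x) powr p \<le> B * (1 + (\<Sum>k<length ys. (1 + \<bar>x k\<bar>) ^ N))"
    using poly_eval_powr_bound[OF c p] by blast
  have [measurable]: "poly_fun W c ys \<in> borel_measurable M" using ys by (rule poly_fun_measurable)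
  have int: "integrable M (\<lambda>\<omega>. B * (1 + (\<Sum>k<length ys. (1 + \<bar>W (ys ! k) \<omega>\<bar>) ^ N)))"
    using ys by (intro integrable_mult_right Bochner_Integration.integrable_add
        Bochner_Integration.integrable_sum integrable_W_power) auto
  have le: "norm (cmod (poly_fun W c ys \<omega>) powr p)
      \<le> norm (B * (1 + (\<Sum>k<length ys. (1 + \<bar>W (ys ! k) \<omega>\<bar>) ^ N)))" for \<omega>
    using bound[of "\<lambda>k. W (ys ! k) \<omega>"] unfolding poly_fun_def real_norm_def
    by (smt (verit) powr_ge_zero)
  have "integrable M (\<lambda>\<omega>. cmod (poly_fun W c ys \<omega>) powr p)"
    by (rule Bochner_Integration.integrable_bound[OF int]) (simp, rule AE_I2, rule le)
  then show ?thesis by (simp add: in_Lp_def)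
qed


subsection \<open>Extension to the \<open>L\<^sup>p\<close>-closure of polynomials\<close>

context
  fixes xs :: "(real \<Rightarrow> real) list"
  assumes xsL2: "set xs \<subseteq> L2"
begin

lemma poly_fun_in_Lp_closure:
  assumes c: "is_poly_coeffs c" and p: "0 < p"
  shows "poly_fun W c xs \<in> Lp_closure_poly M p W xs"
proof -
  have "Lp_norm M p (\<lambda>\<omega>. poly_fun W c xs \<omega> - poly_fun W c xs \<omega>) = 0"
    using p by (simp add: Lp_norm_def)
  then show ?thesis
    using poly_fun_in_Lp[OF xsL2 c p] c
    by (auto simp: Lp_closure_poly_def intro!: exI[of _ "\<lambda>_. c"])
qed

lemma Lp_closure_poly_lincomb:
  assumes f: "f \<in> Lp_closure_poly M p W xs" and g: "g \<in> Lp_closure_poly M p W xs" and p: "0 < p"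
  shows "(\<lambda>\<omega>. a * f \<omega> + b * g \<omega>) \<in> Lp_closure_poly M p W xs"
proof -
  obtain cs where cs: "\<And>n. is_poly_coeffs (cs n)"
    and cl: "(\<lambda>n. Lp_norm M p (\<lambda>\<omega>. poly_fun W (cs n) xs \<omega> - f \<omega>)) \<longlonglongrightarrow> 0"
    using f by (auto simp: Lp_closure_poly_def)
  obtain ds where ds: "\<And>n. is_poly_coeffs (ds n)"
    and dl: "(\<lambda>n. Lp_norm M p (\<lambda>\<omega>. poly_fun W (ds n) xs \<omega> - g \<omega>)) \<longlonglongrightarrow> 0"
    using g by (auto simp: Lp_closure_poly_def)
  have fL: "in_Lp M p f" and gL: "in_Lp M p g" using f g by (auto simp: Lp_closure_poly_def)
  define es where "es n = (\<lambda>\<alpha>. a * cs n \<alpha> + b * ds n \<alpha>)" for n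
  have es: "is_poly_coeffs (es n)" for n unfolding es_def by (rule is_poly_coeffs_lincomb[OF cs ds])
  have dfL: "in_Lp M p (\<lambda>\<omega>. 1 * poly_fun W (cs n) xs \<omega> + (-1) * f \<omega>)" for n
    by (rule in_Lp_lincomb[OF poly_fun_in_Lp[OF xsL2 cs p] fL p])
  have dgL: "in_Lp M p (\<lambda>\<omega>. 1 * poly_fun W (ds n) xs \<omega> + (-1) * g \<omega>)" for n
    by (rule in_Lp_lincomb[OF poly_fun_in_Lp[OF xsL2 ds p] gL p])
  have I1: "(\<lambda>n. LINT \<omega>|M. cmod (poly_fun W (cs n) xs \<omega> - f \<omega>) powr p) \<longlonglongrightarrow> 0"
    using cl Lp_norm_tendsto_0_iff[OF p, of M "\<lambda>n \<omega>. poly_fun W (cs n) xs \<omega> - f \<omega>"] by simp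
  have I2: "(\<lambda>n. LINT \<omega>|M. cmod (poly_fun W (ds n) xs \<omega> - g \<omega>) powr p) \<longlonglongrightarrow> 0"
    using dl Lp_norm_tendsto_0_iff[OF p, of M "\<lambda>n \<omega>. poly_fun W (ds n) xs \<omega> - g \<omega>"] by simp
  have bnd: "(LINT \<omega>|M. cmod (poly_fun W (es n) xs \<omega> - (a * f \<omega> + b * g \<omega>)) powr p)
      \<le> 2 powr p * (cmod a powr p * (LINT \<omega>|M. cmod (poly_fun W (cs n) xs \<omega> - f \<omega>) powr p)
                    + cmod b powr p * (LINT \<omega>|M. cmod (poly_fun W (ds n) xs \<omega> - g \<omega>) powr p))" for n
  proof -
    have e: "poly_fun W (es n) xs \<omega> - (a * f \<omega> + b * g \<omega>)
        = a * (1 * poly_fun W (cs n) xs \<omega> + (-1) * f \<omega>) + b * (1 * poly_fun W (ds n) xs \<omega> + (-1) * g \<omega>)" for \<omega>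
      unfolding es_def poly_fun_lincomb[OF cs ds] by (simp add: algebra_simps)
    show ?thesis unfolding e using integral_lincomb_powr_le[OF dfL dgL p, where a=a and b=b] by simp
  qed
  have "(\<lambda>n. 2 powr p * (cmod a powr p * (LINT \<omega>|M. cmod (poly_fun W (cs n) xs \<omega> - f \<omega>) powr p)
                    + cmod b powr p * (LINT \<omega>|M. cmod (poly_fun W (ds n) xs \<omega> - g \<omega>) powr p))) \<longlonglongrightarrow> 0"
    using I1 I2 by (auto intro!: tendsto_eq_intros)
  then have "(\<lambda>n. LINT \<omega>|M. cmod (poly_fun W (es n) xs \<omega> - (a * f \<omega> + b * g \<omega>)) powr p) \<longlonglongrightarrow> 0"
    by (rule Lim_null_comparison[rotated]) (use bnd integral_norm_powr_nonneg in \<open>auto intro!: always_eventually simp: abs_of_nonneg\<close>)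
  then have "(\<lambda>n. Lp_norm M p (\<lambda>\<omega>. poly_fun W (es n) xs \<omega> - (a * f \<omega> + b * g \<omega>))) \<longlonglongrightarrow> 0"
    using Lp_norm_tendsto_0_iff[OF p, of M "\<lambda>n \<omega>. poly_fun W (es n) xs \<omega> - (a * f \<omega> + b * g \<omega>)"] by simp
  moreover have "in_Lp M p (\<lambda>\<omega>. a * f \<omega> + b * g \<omega>)" by (rule in_Lp_lincomb[OF fL gL p])
  ultimately show ?thesis using es by (auto simp: Lp_closure_poly_def)
qed

lemma Lp_closure_poly_factorizes:
  assumes f: "f \<in> Lp_closure_poly M p W xs" and p: "0 < p"
  shows "\<exists>F. F \<in> borel_measurable (PiM {..<length xs} (\<lambda>_. borel)) \<and>
    (AE \<omega> in M. f \<omega> = F (\<lambda>k\<in>{..<length xs}. W (xs!k) \<omega>))"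
proof -
  obtain cs where cs: "\<And>n. is_poly_coeffs (cs n)"
    and cl: "(\<lambda>n. Lp_norm M p (\<lambda>\<omega>. poly_fun W (cs n) xs \<omega> - f \<omega>)) \<longlonglongrightarrow> 0"
    using f by (auto simp: Lp_closure_poly_def)
  have fL: "in_Lp M p f" using f by (auto simp: Lp_closure_poly_def)
  define u where "u n \<omega> = cmod (poly_fun W (cs n) xs \<omega> - f \<omega>) powr p" for n \<omega>
  have ui: "integrable M (u n)" for n
  proof -
    have "in_Lp M p (\<lambda>\<omega>. 1 * poly_fun W (cs n) xs \<omega> + (-1) * f \<omega>)"
      by (rule in_Lp_lincomb[OF poly_fun_in_Lp[OF xsL2 cs p] fL p])
    then show ?thesis by (simp add: in_Lp_def u_def[abs_def])
  qed
  have "(\<lambda>n. LINT \<omega>|M. u n \<omega>) \<longlonglongrightarrow> 0"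
    using cl Lp_norm_tendsto_0_iff[OF p, of M "\<lambda>n \<omega>. poly_fun W (cs n) xs \<omega> - f \<omega>"] by (simp add: u_def)
  then have "(\<lambda>n. (\<integral>x. norm (u n x) \<partial>M)) \<longlonglongrightarrow> 0" by (simp add: u_def)
  from tendsto_L1_AE_subseq[OF ui this]
  obtain r :: "nat \<Rightarrow> nat" where r: "strict_mono r" and ae: "AE x in M. (\<lambda>n. u (r n) x) \<longlonglongrightarrow> 0"
    by blast
  define F where "F z = lim (\<lambda>n. poly_eval (cs (r n)) (length xs) z)" for z
  have Fm: "F \<in> borel_measurable (PiM {..<length xs} (\<lambda>_. borel))"
    unfolding F_def[abs_def] by (rule borel_measurable_lim_metric) (rule poly_eval_measurable)
  have "AE \<omega> in M. f \<omega> = F (\<lambda>k\<in>{..<length xs}. W (xs!k) \<omega>)"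
    using ae
  proof (elim AE_mp, intro AE_I2 impI)
    fix \<omega> assume H: "(\<lambda>n. u (r n) \<omega>) \<longlonglongrightarrow> 0"
    have "(\<lambda>n. u (r n) \<omega> powr (1 / p)) \<longlonglongrightarrow> 0"
      using H p by (intro tendsto_zero_powrI[where b="1/p"]) (auto simp: u_def)
    then have "(\<lambda>n. cmod (poly_fun W (cs (r n)) xs \<omega> - f \<omega>)) \<longlonglongrightarrow> 0"
      using p by (simp add: u_def powr_powr)
    then have "(\<lambda>n. poly_fun W (cs (r n)) xs \<omega> - f \<omega>) \<longlonglongrightarrow> 0"
      by (simp add: tendsto_norm_zero_iff)
    then have "(\<lambda>n. poly_fun W (cs (r n)) xs \<omega>) \<longlonglongrightarrow> f \<omega>"
      by (simp add: LIM_zero_iff)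
    then have "(\<lambda>n. poly_eval (cs (r n)) (length xs) (\<lambda>k\<in>{..<length xs}. W (xs!k) \<omega>)) \<longlonglongrightarrow> f \<omega>"
      by (simp add: poly_fun_eq_poly_eval)
    then show "f \<omega> = F (\<lambda>k\<in>{..<length xs}. W (xs!k) \<omega>)"
      unfolding F_def by (simp add: limI)
  qed
  then show ?thesis using Fm by blast
qed


lemma W_perp_vector_measurable:
  "\<eta> \<in> L2 \<Longrightarrow> (\<lambda>\<omega>. \<lambda>k\<in>{..<length xs}. W (perp \<eta> (xs ! k)) \<omega>) \<in> measurable M (PiM {..<length xs} (\<lambda>_. borel))"
  using xsL2 by (intro measurable_restrict W_measurable perp_in_L2) auto

lemma Lp_norm_poly_fun_perp_le:
  assumes \<eta>: "\<eta> \<in> L2" and K: "1 \<le> K" and p: "1 \<le> p" and c: "is_poly_coeffs c"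
    and dom: "\<And>G. G \<in> borel_measurable (PiM {..<length xs} (\<lambda>_. borel)) \<Longrightarrow>
      (\<integral>\<^sup>+\<omega>. G (\<lambda>k\<in>{..<length xs}. W (perp \<eta> (xs ! k)) \<omega>) \<partial>M)
        \<le> ennreal K * (\<integral>\<^sup>+\<omega>. G (\<lambda>k\<in>{..<length xs}. W (xs ! k) \<omega>) \<partial>M)"
  shows "Lp_norm M p (poly_fun W c (map (perp \<eta>) xs)) \<le> K * Lp_norm M p (poly_fun W c xs)"
proof -
  have "poly_fun W c (map (perp \<eta>) xs) = (\<lambda>\<omega>. poly_eval c (length xs) (\<lambda>k\<in>{..<length xs}. W (perp \<eta> (xs ! k)) \<omega>))"
    by (auto simp: poly_fun_def intro!: poly_eval_cong)
  moreover have "poly_fun W c xs = (\<lambda>\<omega>. poly_eval c (length xs) (\<lambda>k\<in>{..<length xs}. W (xs ! k) \<omega>))"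
    by (simp add: poly_fun_eq_poly_eval[abs_def])
  moreover have "in_Lp M p (poly_fun W c xs)"
    using xsL2 c p by (intro poly_fun_in_Lp) auto
  ultimately show ?thesis
    using Lp_comp_transfer(2)[OF W_vector_measurable[OF xsL2] W_perp_vector_measurable[OF \<eta>] poly_eval_measurable _ K p]
      dom by auto
qed

lemma bounded_ext_exists:
  assumes \<eta>: "\<eta> \<in> L2" and K: "1 \<le> K" and p: "1 \<le> p"
    and dom: "\<And>G. G \<in> borel_measurable (PiM {..<length xs} (\<lambda>_. borel)) \<Longrightarrow>
      (\<integral>\<^sup>+\<omega>. G (\<lambda>k\<in>{..<length xs}. W (perp \<eta> (xs ! k)) \<omega>) \<partial>M)
        \<le> ennreal K * (\<integral>\<^sup>+\<omega>. G (\<lambda>k\<in>{..<length xs}. W (xs ! k) \<omega>) \<partial>M)"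
  shows "\<exists>T. bounded_ext M p W \<eta> xs T"
proof -
  let ?PM = "PiM {..<length xs} (\<lambda>_. borel) :: (nat \<Rightarrow> real) measure"
    and ?Cl = "Lp_closure_poly M p W xs"
  define X where "X \<omega> = (\<lambda>k\<in>{..<length xs}. W (xs ! k) \<omega>)" for \<omega>
  define X' where "X' \<omega> = (\<lambda>k\<in>{..<length xs}. W (perp \<eta> (xs ! k)) \<omega>)" for \<omega>
  define T where "T = transport M ?PM X X'"
  have [measurable]: "X \<in> measurable M ?PM" "X' \<in> measurable M ?PM"
    using W_vector_measurable[OF xsL2] W_perp_vector_measurable[OF \<eta>] by (simp_all add: X_def[abs_def] X'_def[abs_def])
  have dom': "\<forall>G \<in> borel_measurable ?PM. (\<integral>\<^sup>+\<omega>. G (X' \<omega>) \<partial>M) \<le> ennreal K * (\<integral>\<^sup>+\<omega>. G (X \<omega>) \<partial>M)"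
    using dom by (simp add: X_def X'_def)
  have T: "AE \<omega> in M. T f \<omega> = F (X' \<omega>)"
    if "F \<in> borel_measurable ?PM" "AE \<omega> in M. f \<omega> = F (X \<omega>)" for f F
    unfolding T_def using that
    by (intro AE_transport_eq[where N="?PM" and K=K]) (simp_all add: dom'[unfolded Ball_def])
  have rep: "\<exists>F. F \<in> borel_measurable ?PM \<and> (AE \<omega> in M. f \<omega> = F (X \<omega>))" if "f \<in> ?Cl" for f
    using Lp_closure_poly_factorizes[OF that] p by (simp add: X_def)
  have T_Lp: "in_Lp M p (T f)" "Lp_norm M p (T f) \<le> K * Lp_norm M p f" if f: "f \<in> ?Cl" for f
  proof -
    obtain F where [measurable]: "F \<in> borel_measurable ?PM" and F: "AE \<omega> in M. f \<omega> = F (X \<omega>)"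
      using rep[OF f] by blast
    have [measurable]: "f \<in> borel_measurable M" "T f \<in> borel_measurable M"
      using f transport_measurable[of X' M ?PM F f X] F by (auto simp: Lp_closure_poly_def in_Lp_def T_def)
    have "in_Lp M p f" using f by (simp add: Lp_closure_poly_def)
    then have "in_Lp M p (\<lambda>\<omega>. F (X \<omega>))" by (rule in_Lp_cong_AE[OF _ F]) measurable
    then have Lp: "in_Lp M p (\<lambda>\<omega>. F (X' \<omega>))" "Lp_norm M p (\<lambda>\<omega>. F (X' \<omega>)) \<le> K * Lp_norm M p (\<lambda>\<omega>. F (X \<omega>))"
      using K p
      by (intro Lp_comp_transfer[where N="?PM" and K=K and F=F and X=X and X'=X'];
          simp add: dom'[unfolded Ball_def])+
    have "AE \<omega> in M. F (X' \<omega>) = T f \<omega>" using T[OF _ F] by (auto elim!: AE_mp)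
    with Lp(1) show "in_Lp M p (T f)" by (rule in_Lp_cong_AE) measurable
    have "Lp_norm M p (T f) = Lp_norm M p (\<lambda>\<omega>. F (X' \<omega>))" "Lp_norm M p (\<lambda>\<omega>. F (X \<omega>)) = Lp_norm M p f"
      using T[OF _ F] F by (auto intro!: Lp_norm_cong_AE elim!: AE_mp)
    then show "Lp_norm M p (T f) \<le> K * Lp_norm M p f" using Lp(2) by simp
  qed
  have T_lincomb: "AE \<omega> in M. T (\<lambda>\<omega>'. a * f \<omega>' + b * g \<omega>') \<omega> = a * T f \<omega> + b * T g \<omega>"
    if f: "f \<in> ?Cl" and g: "g \<in> ?Cl" for f g a b
  proof -
    obtain F G where [measurable]: "F \<in> borel_measurable ?PM" "G \<in> borel_measurable ?PM"
      and F: "AE \<omega> in M. f \<omega> = F (X \<omega>)" and G: "AE \<omega> in M. g \<omega> = G (X \<omega>)"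
      using rep[OF f] rep[OF g] by blast
    have "AE \<omega> in M. a * f \<omega> + b * g \<omega> = a * F (X \<omega>) + b * G (X \<omega>)"
      using F G by eventually_elim simp
    with T[OF _ this] T[OF _ F] T[OF _ G] show ?thesis
      by (auto elim!: AE_mp)
  qed
  have T_poly: "AE \<omega> in M. T (poly_fun W c xs) \<omega> = poly_fun W c (map (perp \<eta>) xs) \<omega>" for c
  proof -
    have "AE \<omega> in M. poly_fun W c xs \<omega> = poly_eval c (length xs) (X \<omega>)"
      by (simp add: poly_fun_eq_poly_eval X_def)
    from T[OF poly_eval_measurable this]
    have "AE \<omega> in M. T (poly_fun W c xs) \<omega> = poly_eval c (length xs) (X' \<omega>)" .
    moreover have "poly_eval c (length xs) (X' \<omega>) = poly_fun W c (map (perp \<eta>) xs) \<omega>" for \<omega>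
      unfolding X'_def poly_fun_def length_map by (rule poly_eval_cong) simp
    ultimately show ?thesis by simp
  qed
  have "bounded_ext M p W \<eta> xs T"
    unfolding bounded_ext_def using T_Lp T_lincomb T_poly by blast
  then show ?thesis by blast
qed


lemma AE_bounded_ext_sub_poly:
  assumes S: "bounded_ext M p W \<eta> xs S" and f: "f \<in> Lp_closure_poly M p W xs"
    and c: "is_poly_coeffs c" and p: "0 < p"
  shows "AE \<omega> in M. S (\<lambda>\<omega>'. 1 * f \<omega>' + (- 1) * poly_fun W c xs \<omega>') \<omega>
    = 1 * S f \<omega> + (- 1) * poly_fun W c (map (perp \<eta>) xs) \<omega>"
proof -
  have "poly_fun W c xs \<in> Lp_closure_poly M p W xs" using c p by (rule poly_fun_in_Lp_closure)
  then have "AE \<omega> in M. S (\<lambda>\<omega>'. 1 * f \<omega>' + (- 1) * poly_fun W c xs \<omega>') \<omega>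
      = 1 * S f \<omega> + (- 1) * S (poly_fun W c xs) \<omega>"
    using S f unfolding bounded_ext_def by blast
  moreover have "AE \<omega> in M. S (poly_fun W c xs) \<omega> = poly_fun W c (map (perp \<eta>) xs) \<omega>"
    using S c unfolding bounded_ext_def by blast
  ultimately show ?thesis by eventually_elim simp
qed

lemma bounded_ext_unique:
  assumes p: "0 < p" and T: "bounded_ext M p W \<eta> xs T" and T': "bounded_ext M p W \<eta> xs T'"
    and f: "f \<in> Lp_closure_poly M p W xs"
  shows "AE \<omega> in M. T' f \<omega> = T f \<omega>"
proof -
  let ?Cl = "Lp_closure_poly M p W xs"
  obtain K where K: "\<And>g. g \<in> ?Cl \<Longrightarrow> Lp_norm M p (T g) \<le> K * Lp_norm M p g"
    using T unfolding bounded_ext_def by blast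
  obtain K' where K': "\<And>g. g \<in> ?Cl \<Longrightarrow> Lp_norm M p (T' g) \<le> K' * Lp_norm M p g"
    using T' unfolding bounded_ext_def by blast
  obtain cs where cs: "\<And>n. is_poly_coeffs (cs n)"
    and approx: "(\<lambda>n. Lp_norm M p (\<lambda>\<omega>. poly_fun W (cs n) xs \<omega> - f \<omega>)) \<longlonglongrightarrow> 0"
    using f by (auto simp: Lp_closure_poly_def)
  define h where "h n \<omega> = 1 * f \<omega> + (- 1) * poly_fun W (cs n) xs \<omega>" for n \<omega>
  have P: "poly_fun W (cs n) xs \<in> ?Cl" for n using cs p by (rule poly_fun_in_Lp_closure)
  have h: "h n \<in> ?Cl" for n unfolding h_def[abs_def] using f P p by (rule Lp_closure_poly_lincomb)
  have "Lp_norm M p (h n) = Lp_norm M p (\<lambda>\<omega>. poly_fun W (cs n) xs \<omega> - f \<omega>)" for n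
    by (simp add: h_def Lp_norm_def norm_minus_commute)
  with approx have h_0: "(\<lambda>n. Lp_norm M p (h n)) \<longlonglongrightarrow> 0" by simp
  define D where "D \<omega> = 1 * T' f \<omega> + (- 1) * T f \<omega>" for \<omega>
  have D_Lp: "in_Lp M p D"
    using T T' f p unfolding D_def[abs_def] bounded_ext_def by (intro in_Lp_lincomb) auto
  have D_eq: "AE \<omega> in M. D \<omega> = 1 * T' (h n) \<omega> + (- 1) * T (h n) \<omega>" for n
    using AE_bounded_ext_sub_poly[OF T f cs[of n] p] AE_bounded_ext_sub_poly[OF T' f cs[of n] p]
    unfolding h_def[abs_def] by eventually_elim (simp add: D_def)
  have bound: "(LINT \<omega>|M. cmod (D \<omega>) powr p) \<le> 2 powr p * ((\<bar>K'\<bar> * Lp_norm M p (h n)) powr p + (\<bar>K\<bar> * Lp_norm M p (h n)) powr p)" for n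
  proof -
    have Lp: "in_Lp M p (T' (h n))" "in_Lp M p (T (h n))"
      using T T' h unfolding bounded_ext_def by blast+
    have "(LINT \<omega>|M. cmod (D \<omega>) powr p) = (LINT \<omega>|M. cmod (1 * T' (h n) \<omega> + (- 1) * T (h n) \<omega>) powr p)"
      using D_eq[of n] D_Lp in_Lp_lincomb[OF Lp p, of 1 "- 1"]
      by (intro integral_cong_AE) (auto simp: in_Lp_def elim!: AE_mp)
    also have "\<dots> \<le> 2 powr p * (Lp_norm M p (T' (h n)) powr p + Lp_norm M p (T (h n)) powr p)"
      using integral_lincomb_powr_le[OF Lp p, of 1 "- 1"] p by (simp add: Lp_norm_powr)
    also have "\<dots> \<le> 2 powr p * ((\<bar>K'\<bar> * Lp_norm M p (h n)) powr p + (\<bar>K\<bar> * Lp_norm M p (h n)) powr p)"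
    proof -
      have "Lp_norm M p (T' (h n)) \<le> \<bar>K'\<bar> * Lp_norm M p (h n)" "Lp_norm M p (T (h n)) \<le> \<bar>K\<bar> * Lp_norm M p (h n)"
        using K'[OF h] K[OF h] Lp_norm_nonneg[of M p "h n"]
        by (meson abs_ge_self mult_right_mono order_trans)+
      then show ?thesis
        using p by (intro mult_left_mono add_mono powr_mono2) (auto simp: Lp_norm_nonneg)
    qed
    finally show ?thesis .
  qed
  have lim: "(\<lambda>n. 2 powr p * ((\<bar>K'\<bar> * Lp_norm M p (h n)) powr p + (\<bar>K\<bar> * Lp_norm M p (h n)) powr p)) \<longlonglongrightarrow> 2 powr p * (0 + 0)"
    using p h_0
    by (intro tendsto_intros tendsto_zero_powrI[where b=p] tendsto_mult_right_zero)
      (auto intro!: always_eventually simp: Lp_norm_nonneg)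
  then have "(\<lambda>n. 2 powr p * ((\<bar>K'\<bar> * Lp_norm M p (h n)) powr p + (\<bar>K\<bar> * Lp_norm M p (h n)) powr p)) \<longlonglongrightarrow> 0"
    by simp
  with D_Lp p bound have "AE \<omega> in M. D \<omega> = 0" by (rule AE_eq_0_of_integral_powr_le)
  then show ?thesis by (auto elim!: AE_mp simp: D_def)
qed

end
end

theorem proposition2p8:
  fixes M :: "'a measure" and W :: "(real \<Rightarrow> real) \<Rightarrow> 'a \<Rightarrow> real"
    and \<eta> :: "real \<Rightarrow> real" and xs :: "(real \<Rightarrow> real) list"
  assumes "isonormal M W"
    and "\<eta> \<in> L2" and "set xs \<subseteq> L2"
    and "L2_lin_indep (\<eta> # xs)"
    and "ip \<eta> \<eta> = 1"
  shows "\<exists>C :: real.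
     (\<forall>p :: real. p \<ge> 1 \<longrightarrow> (\<forall>c. is_poly_coeffs c \<longrightarrow>
        Lp_norm M p (poly_fun W c (map (perp \<eta>) xs)) \<le> C * Lp_norm M p (poly_fun W c xs)))
   \<and> (\<forall>p :: real. p \<ge> 1 \<longrightarrow>
        (\<exists>T. bounded_ext M p W \<eta> xs T \<and>
          (\<forall>T'. bounded_ext M p W \<eta> xs T' \<longrightarrow>
             (\<forall>f\<in>Lp_closure_poly M p W xs. AE \<omega> in M. T' f \<omega> = T f \<omega>))))"
proof -
  interpret isonormal_process M W by unfold_locales (rule assms(1))
  obtain K where K: "1 \<le> K"
    and dom: "\<And>G. G \<in> borel_measurable (PiM {..<length xs} (\<lambda>_. borel)) \<Longrightarrow>
      (\<integral>\<^sup>+\<omega>. G (\<lambda>k\<in>{..<length xs}. W (perp \<eta> (xs ! k)) \<omega>) \<partial>M)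
        \<le> ennreal K * (\<integral>\<^sup>+\<omega>. G (\<lambda>k\<in>{..<length xs}. W (xs ! k) \<omega>) \<partial>M)"
    using nn_integral_W_perp_le[OF assms(2,5,3,4)] by blast
  show ?thesis
  proof (intro exI[of _ K] conjI allI impI ballI)
    fix p :: real and c assume "1 \<le> p" "is_poly_coeffs c"
    then show "Lp_norm M p (poly_fun W c (map (perp \<eta>) xs)) \<le> K * Lp_norm M p (poly_fun W c xs)"
      using Lp_norm_poly_fun_perp_le[OF assms(3,2) K _ _ dom] by simp
  next
    fix p :: real assume p: "1 \<le> p"
    obtain T where "bounded_ext M p W \<eta> xs T"
      using bounded_ext_exists[OF assms(3,2) K p dom] by blast
    moreover have "AE \<omega> in M. T' f \<omega> = T f \<omega>"
      if "bounded_ext M p W \<eta> xs T" "bounded_ext M p W \<eta> xs T'" "f \<in> Lp_closure_poly M p W xs" for T T' f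
      using bounded_ext_unique[OF assms(3) _ that] p by simp
    ultimately show "\<exists>T. bounded_ext M p W \<eta> xs T \<and>
        (\<forall>T'. bounded_ext M p W \<eta> xs T' \<longrightarrow> (\<forall>f\<in>Lp_closure_poly M p W xs. AE \<omega> in M. T' f \<omega> = T f \<omega>))"
      by blast
  qed
qed

end
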